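(* Let $A$ be a commutative unital $\mathbb K$-algebra, let $B=\mathrm{Diff}^1(A)$, and let $\mu\in L^2(B)$ be the commutator $\mu(u,v)=u\circ v-v\circ u$ of $\mathbb K$-linear endomorphisms of $A$. Then for every $n\ge 1$ and every $\omega\in\Omega^n(A)$, the element $[\mu,\omega]\in L^{n+1}(B)$ belongs to $\Omega^{n+1}(A)$, and $$[\mu,\omega]=-\,d\omega ,$$ i.e. for all $X_1,\dots,X_{n+1}\in \mathrm{Der}^1(A)$, $$[\mu,\omega](X_1,\dots,X_{n+1})=-\Big(\sum_{i=1}^{n+1}(-1)^{i-1}X_i\big(\omega(X_1,\dots,\widehat{X_i},\dots,X_{n+1})\big)+\sum_{i<j}(-1)^{i+j}\omega([X_i,X_j],X_1,\dots,\widehat{X_i},\dots,\widehat{X_j},\dots,X_{n+1})\Big).$$ In particular $\Omega(A)=\bigoplus_{n\ge1}\Omega^n(A)$ is invariant under $\partial_\mu=[\mu,\cdot\,]$.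
   Context: $\mathbb K$ denotes $\mathbb R$ or $\mathbb C$. For a $\mathbb K$-vector space $V$ and $k\ge1$, $L^k(V)$ is the space of $\mathbb K$-multilinear alternating maps $V^k\to V$; $L^0(V)=V$ and $L(V)=\bigoplus_{k\ge0}L^k(V)$. The compositional product of $\alpha\in L^m(V)$ and $\beta\in L^n(V)$ (with $m\ge 1$) is $\alpha\circ\beta\in L^{m+n-1}(V)$, $$(\alpha\circ\beta)(u_1,\dots,u_{m+n-1})=\sum_{s}\operatorname{sgn}(s)\,\alpha\big(\beta(u_{s(1)},\dots,u_{s(n)}),u_{s(n+1)},\dots,u_{s(m+n-1)}\big),$$ the sum running over permutations $s$ of $\{1,\dots,m+n-1\}$ with $s(1)<\dots<s(n)$ and $s(n+1)<\dots<s(m+n-1)$; if $m=0$ one sets $\alpha\circ\beta=0$. The bracket on $L(V)$ is, for $\alpha\in L^m(V)$, $\beta\in L^n(V)$, $$[\alpha,\beta]=(-1)^{(m+1)n}\alpha\circ\beta+(-1)^m\beta\circ\alpha .$$ For a commutative unital $\mathbb K$-algebra $A$: $\mathrm{Der}^1(A)$ is the space of $\mathbb K$-linear derivations of $A$; $A$ is identified with the multiplication operators $b\mapsto ab$ inside $\mathrm{End}_{\mathbb K}(A)$; $\mathrm{Diff}^1(A)$ is the set of $\varphi\in\mathrm{End}_{\mathbb K}(A)$ such that the commutator $\varphi\circ a-a\circ\varphi$ is a multiplication operator for every $a\in A$; one has $\mathrm{Diff}^1(A)=\mathrm{Der}^1(A)\oplus A$ via $\varphi=(\varphi-\varphi(1))+\varphi(1)$.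 For $n\ge1$, $\Omega^n(A)\subset L^n(\mathrm{Diff}^1(A))$ is the set of $\omega$ such that: (i) $\omega$ takes values in $A\subset \mathrm{Diff}^1(A)$; (ii) $\omega(u_1,\dots,u_n)=0$ whenever some $u_i$ lies in $A$; (iii) $\omega(au_1,u_2,\dots,u_n)=a\,\omega(u_1,\dots,u_n)$ for $a\in A$ and $u_1,\dots,u_n\in\mathrm{Der}^1(A)$. Such an $\omega$ is determined by its values on $\mathrm{Der}^1(A)$, and $d\omega$ denotes the element of $\Omega^{n+1}(A)$ given on derivations by the usual formula displayed in the claim (with $[X_i,X_j]$ the commutator of derivations). *)

theory Defs
  imports "HOL-Combinatorics.Permutations"
begin

text \<open>The base field K is a type 'k (class field); the commutative unital K-algebra A is a
type 'a of class comm_ring_1 together with its structure map iota : K -> A (a unital ring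
homomorphism).  An element of L^k(V) is
represented by a function on lists of arguments; only its values on lists of length k with
entries in V matter.\<close>

definition K_algebra :: "('k::field \<Rightarrow> 'a::comm_ring_1) \<Rightarrow> bool" where
  "K_algebra \<iota> \<longleftrightarrow> \<iota> 1 = 1 \<and> (\<forall>x y. \<iota> (x + y) = \<iota> x + \<iota> y) \<and> (\<forall>x y. \<iota> (x * y) = \<iota> x * \<iota> y)"

definition K_linear :: "('k::field \<Rightarrow> 'a::comm_ring_1) \<Rightarrow> ('a \<Rightarrow> 'a) \<Rightarrow> bool" where
  "K_linear \<iota> f \<longleftrightarrow> (\<forall>x y. f (x + y) = f x + f y) \<and> (\<forall>c x. f (\<iota> c * x) = \<iota> c * f x)"

text \<open>Multiplication operator b |-> a b (identification of A inside End_K(A)).\<close>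
definition mult_op :: "'a::comm_ring_1 \<Rightarrow> 'a \<Rightarrow> 'a" where
  "mult_op a = (\<lambda>b. a * b)"

definition Der1 :: "('k::field \<Rightarrow> 'a::comm_ring_1) \<Rightarrow> ('a \<Rightarrow> 'a) set" where
  "Der1 \<iota> = {D. K_linear \<iota> D \<and> (\<forall>a b. D (a * b) = a * D b + D a * b)}"

definition Diff1 :: "('k::field \<Rightarrow> 'a::comm_ring_1) \<Rightarrow> ('a \<Rightarrow> 'a) set" where
  "Diff1 \<iota> = {\<phi>. K_linear \<iota> \<phi> \<and> (\<forall>a. \<exists>c. (\<lambda>b. \<phi> (a * b) - a * \<phi> b) = mult_op c)}"

definition op_add :: "('a::comm_ring_1 \<Rightarrow> 'a) \<Rightarrow> ('a \<Rightarrow> 'a) \<Rightarrow> 'a \<Rightarrow> 'a" where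
  "op_add u v = (\<lambda>b. u b + v b)"

definition op_scale :: "('k::field \<Rightarrow> 'a::comm_ring_1) \<Rightarrow> 'k \<Rightarrow> ('a \<Rightarrow> 'a) \<Rightarrow> 'a \<Rightarrow> 'a" where
  "op_scale \<iota> c u = (\<lambda>b. \<iota> c * u b)"

definition Lk :: "('k::field \<Rightarrow> 'a::comm_ring_1) \<Rightarrow> nat \<Rightarrow> (('a \<Rightarrow> 'a) list \<Rightarrow> ('a \<Rightarrow> 'a)) \<Rightarrow> bool" where
  "Lk \<iota> k \<phi> \<longleftrightarrow>
     (\<forall>us. length us = k \<and> set us \<subseteq> Diff1 \<iota> \<longrightarrow> \<phi> us \<in> Diff1 \<iota>) \<and>
     (\<forall>us i u v. length us = k \<and> set us \<subseteq> Diff1 \<iota> \<and> i < k \<and> u \<in> Diff1 \<iota> \<and> v \<in> Diff1 \<iota> \<longrightarrow>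
         \<phi> (us[i := op_add u v]) = op_add (\<phi> (us[i := u])) (\<phi> (us[i := v]))) \<and>
     (\<forall>us i c u. length us = k \<and> set us \<subseteq> Diff1 \<iota> \<and> i < k \<and> u \<in> Diff1 \<iota> \<longrightarrow>
         \<phi> (us[i := op_scale \<iota> c u]) = op_scale \<iota> c (\<phi> (us[i := u]))) \<and>
     (\<forall>us i j. length us = k \<and> set us \<subseteq> Diff1 \<iota> \<and> i < j \<and> j < k \<and> us ! i = us ! j \<longrightarrow>
         \<phi> us = (\<lambda>b. 0))"

text \<open>(m,n)-shuffles of {0..<m+n}: permutations increasing on the first n and on the last m
positions (0-indexed version of the permutations s in the compositional product).\<close>
definition shuffles :: "nat \<Rightarrow> nat \<Rightarrow> (nat \<Rightarrow> nat) set" where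
  "shuffles n r = {s. s permutes {0..<n + r} \<and> strict_mono_on {0..<n} s \<and> strict_mono_on {n..<n + r} s}"

definition comp_prod :: "nat \<Rightarrow> nat \<Rightarrow> (('a::comm_ring_1 \<Rightarrow> 'a) list \<Rightarrow> ('a \<Rightarrow> 'a))
    \<Rightarrow> (('a \<Rightarrow> 'a) list \<Rightarrow> ('a \<Rightarrow> 'a)) \<Rightarrow> ('a \<Rightarrow> 'a) list \<Rightarrow> 'a \<Rightarrow> 'a" where
  "comp_prod m n \<alpha> \<beta> us =
     (if m = 0 then (\<lambda>b. 0) else
      (\<lambda>b. \<Sum>s\<in>shuffles n (m - 1).
          of_int (sign s) * \<alpha> (\<beta> (map (\<lambda>i. us ! s i) [0..<n]) # map (\<lambda>i. us ! s i) [n..<m + n - 1]) b))"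

definition bracket :: "nat \<Rightarrow> nat \<Rightarrow> (('a::comm_ring_1 \<Rightarrow> 'a) list \<Rightarrow> ('a \<Rightarrow> 'a))
    \<Rightarrow> (('a \<Rightarrow> 'a) list \<Rightarrow> ('a \<Rightarrow> 'a)) \<Rightarrow> ('a \<Rightarrow> 'a) list \<Rightarrow> 'a \<Rightarrow> 'a" where
  "bracket m n \<alpha> \<beta> us =
     (\<lambda>b. (-1) ^ ((m + 1) * n) * comp_prod m n \<alpha> \<beta> us b + (-1) ^ m * comp_prod n m \<beta> \<alpha> us b)"

definition mu :: "('a::comm_ring_1 \<Rightarrow> 'a) list \<Rightarrow> 'a \<Rightarrow> 'a" where
  "mu us = (\<lambda>b. (us ! 0) ((us ! 1) b) - (us ! 1) ((us ! 0) b))"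

definition Omega :: "('k::field \<Rightarrow> 'a::comm_ring_1) \<Rightarrow> nat \<Rightarrow> (('a \<Rightarrow> 'a) list \<Rightarrow> ('a \<Rightarrow> 'a)) \<Rightarrow> bool" where
  "Omega \<iota> n \<omega> \<longleftrightarrow> Lk \<iota> n \<omega> \<and>
     (\<forall>us. length us = n \<and> set us \<subseteq> Diff1 \<iota> \<longrightarrow> (\<exists>a. \<omega> us = mult_op a)) \<and>
     (\<forall>us. length us = n \<and> set us \<subseteq> Diff1 \<iota> \<and> (\<exists>i<n. us ! i \<in> range mult_op) \<longrightarrow> \<omega> us = (\<lambda>b. 0)) \<and>
     (\<forall>a us. length us = n \<and> set us \<subseteq> Der1 \<iota> \<and> 0 < n \<longrightarrow>
         \<omega> (us[0 := mult_op a \<circ> us ! 0]) = mult_op a \<circ> \<omega> us)"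

definition del_nth :: "nat \<Rightarrow> 'b list \<Rightarrow> 'b list" where
  "del_nth i xs = take i xs @ drop (Suc i) xs"

text \<open>The element (d omega)(X_1,...,X_{n+1}) of A (0-indexed: (-1)^i and (-1)^(i+j) have the
same parity as the 1-indexed signs of the paper).  The value omega(...) in A is recovered as
omega(...)(1).\<close>
definition d_val :: "(('a::comm_ring_1 \<Rightarrow> 'a) list \<Rightarrow> ('a \<Rightarrow> 'a)) \<Rightarrow> ('a \<Rightarrow> 'a) list \<Rightarrow> 'a" where
  "d_val \<omega> Xs =
     (\<Sum>i<length Xs. (-1) ^ i * (Xs ! i) (\<omega> (del_nth i Xs) 1)) +
     (\<Sum>j<length Xs. \<Sum>i<j. (-1) ^ (i + j) *
        \<omega> ((\<lambda>b. (Xs ! i) ((Xs ! j) b) - (Xs ! j) ((Xs ! i) b)) # del_nth i (del_nth j Xs)) 1)"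

end

theory Submission
  imports Defs "HOL-Library.Disjoint_Sets"
begin

(*
  Write B = Diff^1(A). Enumerating the (n,1)- and (2,n-1)-shuffles shows that [mu, omega] is
  minus the Chevalley-Eilenberg differential of omega for the Lie algebra End(A) acting on
  itself by commutators,
    sum_i (-1)^i [u_i, omega(.., u_i omitted, ..)] + sum_{i<j} (-1)^(i+j) omega([u_i, u_j], ..).
  This expression inherits multilinearity and alternation from omega. Since omega takes values
  in A and [a, u] lies in A for a in A and u in B, every term is a multiplication operator, and
  the expression vanishes when an argument lies in A. On derivations [X, a] is multiplication
  by X(a), so the expression is multiplication by d omega; d omega is A-linear in its first
  argument because the terms X_j(a) coming from the first sum cancel those coming from
  [a X_1, X_j] = a [X_1, X_j] - X_j(a) X_1.
*)

lemma length_del_nth [simp]: "i < length xs \<Longrightarrow> length (del_nth i xs) = length xs - 1"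
  by (simp add: del_nth_def)

lemma nth_del_nth:
  "i < length xs \<Longrightarrow> k < length xs - 1 \<Longrightarrow> del_nth i xs ! k = (if k < i then xs ! k else xs ! Suc k)"
  by (auto simp: del_nth_def nth_append min_def)

lemma set_del_nth_subset: "set xs \<subseteq> S \<Longrightarrow> set (del_nth i xs) \<subseteq> S"
  unfolding del_nth_def using set_take_subset set_drop_subset by fastforce

lemma nth_in_set_del_nth: "i < length xs \<Longrightarrow> p < length xs \<Longrightarrow> p \<noteq> i \<Longrightarrow> xs ! p \<in> set (del_nth i xs)"
  by (auto simp: in_set_conv_nth nth_del_nth intro!: exI[of _ "if p < i then p else p - 1"])

lemma nth_in_set_del_nth2:
  assumes "i < j" "j < length xs" "p < length xs" "p \<noteq> i" "p \<noteq> j"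
  shows "xs ! p \<in> set (del_nth i (del_nth j xs))"
proof -
  define p' where "p' = (if p < j then p else p - 1)"
  have "del_nth j xs ! p' = xs ! p" "p' < length (del_nth j xs)" "p' \<noteq> i"
    using assms by (auto simp: p'_def nth_del_nth)
  then show ?thesis
    using nth_in_set_del_nth[of i "del_nth j xs" p'] assms by simp
qed

lemma del_nth_list_update:
  "i < length xs \<Longrightarrow> del_nth i (xs[p := x]) =
    (if p = i then del_nth i xs else if p < i then (del_nth i xs)[p := x] else (del_nth i xs)[p - 1 := x])"
  by (cases "p < length xs")
    (auto simp: list_update_beyond nth_del_nth nth_list_update intro!: nth_equalityI)

lemma del_nth_list_update_other:
  assumes "i < length xs" "p < length xs" "p \<noteq> i"
  obtains q where "q < length xs - 1" "\<And>x. del_nth i (xs[p := x]) = (del_nth i xs)[q := x]"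
  using assms by (intro that[of "if p < i then p else p - 1"]) (auto simp: del_nth_list_update)

lemma del_nth2_list_update_other:
  assumes "i < j" "j < length xs" "p < length xs" "p \<noteq> i" "p \<noteq> j"
  obtains q where "q < length xs - 2"
    "\<And>x. del_nth i (del_nth j (xs[p := x])) = (del_nth i (del_nth j xs))[q := x]"
proof -
  define q1 where "q1 = (if p < j then p else p - 1)"
  have q1: "del_nth j (xs[p := x]) = (del_nth j xs)[q1 := x]" for x
    using assms by (auto simp: del_nth_list_update q1_def)
  obtain q where "q < length (del_nth j xs) - 1"
    "\<And>x. del_nth i ((del_nth j xs)[q1 := x]) = (del_nth i (del_nth j xs))[q := x]"
    by (rule del_nth_list_update_other[of i "del_nth j xs" q1]) (use assms in \<open>auto simp: q1_def\<close>)
  with assms show ?thesis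
    by (intro that[of q]) (auto simp: q1)
qed

lemma del_nth2_list_update_same:
  "i < j \<Longrightarrow> j < length xs \<Longrightarrow> p = i \<or> p = j \<Longrightarrow>
    del_nth i (del_nth j (xs[p := x])) = del_nth i (del_nth j xs)"
  by (auto simp: del_nth_list_update)

lemma del_nth_adjacent_eq:
  assumes "Suc p < length xs" "xs ! p = xs ! Suc p"
  shows "del_nth p xs = del_nth (Suc p) xs"
proof (rule nth_equalityI)
  fix k assume "k < length (del_nth p xs)"
  then show "del_nth p xs ! k = del_nth (Suc p) xs ! k"
    using assms by (cases "k = p") (auto simp: nth_del_nth)
qed (use assms in simp)

lemma nth_del_nth_adjacent:
  assumes "Suc p < length xs" "xs ! p = xs ! Suc p" "i < length xs" "i \<noteq> p" "i \<noteq> Suc p"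
  defines "q \<equiv> if i < p then p - 1 else p"
  shows "Suc q < length (del_nth i xs)" "del_nth i xs ! q = del_nth i xs ! Suc q"
  using assms by (auto simp: nth_del_nth)

lemma length_set_del_nth:
  assumes "length us = Suc n" "set us \<subseteq> S" "i < Suc n"
  shows "length (del_nth i us) = n" "set (del_nth i us) \<subseteq> S"
  using assms by (simp_all add: set_del_nth_subset)

lemma set_list_update_subset: "set us \<subseteq> S \<Longrightarrow> x \<in> S \<Longrightarrow> set (us[i := x]) \<subseteq> S"
  by (metis set_update_subset_insert insert_subset subset_trans)

section \<open>Permutations and shuffles\<close>

primrec cycle_front :: "nat \<Rightarrow> nat \<Rightarrow> nat" where
  "cycle_front 0 = id"
| "cycle_front (Suc i) = Transposition.transpose i (Suc i) \<circ> cycle_front i"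

primrec cycle_back :: "nat \<Rightarrow> nat \<Rightarrow> nat" where
  "cycle_back 0 = id"
| "cycle_back (Suc n) = cycle_back n \<circ> Transposition.transpose n (Suc n)"

lemma cycle_front_apply: "cycle_front i k = (if k = 0 then i else if k \<le> i then k - 1 else k)"
  by (induction i arbitrary: k) (auto simp: Transposition.transpose_def)

lemma cycle_back_apply: "cycle_back n k = (if k < n then k + 1 else if k = n then 0 else k)"
  by (induction n arbitrary: k) (auto simp: Transposition.transpose_def)

lemma permutes_cycle_front: "i < m \<Longrightarrow> cycle_front i permutes {0..<m}"
proof (induction i)
  case (Suc i)
  then show ?case
    by (simp only: cycle_front.simps) (rule permutes_compose, auto intro: permutes_swap_id)
qed (simp only: cycle_front.simps permutes_id)

lemma permutes_cycle_back: "n < m \<Longrightarrow> cycle_back n permutes {0..<m}"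
proof (induction n)
  case (Suc n)
  then show ?case
    by (simp only: cycle_back.simps) (rule permutes_compose, auto intro: permutes_swap_id)
qed (simp only: cycle_back.simps permutes_id)

lemma permutation_cycle_front: "permutation (cycle_front i)"
  by (induction i) (simp_all only: cycle_front.simps permutation_compose permutation_swap_id permutation_id)

lemma permutation_cycle_back: "permutation (cycle_back n)"
  by (induction n) (simp_all only: cycle_back.simps permutation_compose permutation_swap_id permutation_id)

lemma sign_cycle_front: "sign (cycle_front i) = (-1) ^ i"
  by (induction i) (simp_all only: cycle_front.simps sign_compose permutation_swap_id
      permutation_cycle_front sign_swap_id sign_id, simp_all)

lemma sign_cycle_back: "sign (cycle_back n) = (-1) ^ n"
  by (induction n) (simp_all only: cycle_back.simps sign_compose permutation_swap_id
      permutation_cycle_back sign_swap_id sign_id, simp_all)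

declare cycle_front.simps [simp del] cycle_back.simps [simp del]

lemma sorted_wrt_map_strict_mono_on:
  "sorted_wrt (<) xs \<Longrightarrow> strict_mono_on A f \<Longrightarrow> set xs \<subseteq> A \<Longrightarrow> sorted_wrt (<) (map f xs)"
  by (induction xs) (auto simp: strict_mono_on_def)

text \<open>Both permutations map \<open>A\<close> increasingly onto the same set \<open>S - s ` (S - A)\<close>.\<close>

lemma permutes_strict_mono_on_unique:
  fixes s t :: "'a::linorder \<Rightarrow> 'a"
  assumes s: "s permutes S" and t: "t permutes S" and "finite S" and "A \<subseteq> S"
    and mono_s: "strict_mono_on A s" and mono_t: "strict_mono_on A t"
    and off_A: "\<And>k. k \<in> S - A \<Longrightarrow> s k = t k"
  shows "s = t"
proof -
  have "s ` (S - A) = t ` (S - A)"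
    using off_A by (intro image_cong) auto
  then have "S - s ` A = S - t ` A"
    by (simp add: image_set_diff permutes_inj[OF s] permutes_inj[OF t]
        permutes_image[OF s] permutes_image[OF t])
  moreover have "s ` A \<subseteq> S" "t ` A \<subseteq> S"
    using \<open>A \<subseteq> S\<close> permutes_image[OF s] permutes_image[OF t] by auto
  ultimately have same_image: "s ` A = t ` A"
    by blast
  have "finite A"
    using \<open>finite S\<close> \<open>A \<subseteq> S\<close> finite_subset by blast
  define xs where "xs = sorted_list_of_set A"
  have xs: "sorted_wrt (<) xs" "set xs = A"
    using \<open>finite A\<close> by (auto simp: xs_def)
  have "map s xs = map t xs"
  proof (rule sorted_distinct_set_unique)
    show "sorted (map s xs)" "distinct (map s xs)" "sorted (map t xs)" "distinct (map t xs)"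
      using sorted_wrt_map_strict_mono_on[OF xs(1)] mono_s mono_t xs(2) strict_sorted_iff
      by auto
    show "set (map s xs) = set (map t xs)"
      using same_image xs(2) by simp
  qed
  then have on_A: "s k = t k" if "k \<in> A" for k
    using that xs(2) by (auto simp: map_eq_conv)
  show ?thesis
  proof
    fix k
    show "s k = t k"
      using on_A off_A permutes_not_in[OF s] permutes_not_in[OF t] by (cases "k \<in> S") auto
  qed
qed

text \<open>The (n,1)-shuffle putting the last argument in position i, and the (2,n-1)-shuffle
  putting the first two arguments in positions i < j.\<close>

definition shuffle_last :: "nat \<Rightarrow> nat \<Rightarrow> nat \<Rightarrow> nat" where
  "shuffle_last n i = cycle_front i \<circ> cycle_back n"

definition shuffle_pair :: "nat \<Rightarrow> nat \<Rightarrow> nat \<Rightarrow> nat" where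
  "shuffle_pair i j = cycle_front j \<circ> cycle_front (Suc i)"

lemma shuffle_last_last: "shuffle_last n i n = i"
  by (simp add: shuffle_last_def cycle_front_apply cycle_back_apply)

lemma shuffle_last_in_shuffles: "i \<le> n \<Longrightarrow> shuffle_last n i \<in> shuffles n 1"
  unfolding shuffles_def shuffle_last_def
  by (auto simp: permutes_compose permutes_cycle_front permutes_cycle_back strict_mono_on_def
      cycle_front_apply cycle_back_apply)

lemma shuffle_pair_in_shuffles: "i < j \<Longrightarrow> j \<le> n \<Longrightarrow> 1 \<le> n \<Longrightarrow> shuffle_pair i j \<in> shuffles 2 (n - 1)"
  unfolding shuffles_def shuffle_pair_def
  by (auto simp: permutes_compose permutes_cycle_front strict_mono_on_def cycle_front_apply)

lemma sign_shuffle_last: "sign (shuffle_last n i) = (-1) ^ (i + n)"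
  by (simp add: shuffle_last_def sign_compose permutation_cycle_front permutation_cycle_back
      sign_cycle_front sign_cycle_back power_add)

lemma sign_shuffle_pair: "sign (shuffle_pair i j) = (-1) ^ (Suc i + j)"
  by (simp add: shuffle_pair_def sign_compose permutation_cycle_front sign_cycle_front power_add)

lemma shuffles_1_eq: "shuffles n 1 = shuffle_last n ` {..n}"
proof
  show "shuffle_last n ` {..n} \<subseteq> shuffles n 1"
    using shuffle_last_in_shuffles by auto
  show "shuffles n 1 \<subseteq> shuffle_last n ` {..n}"
  proof
    fix s assume s: "s \<in> shuffles n 1"
    then have s_perm: "s permutes {0..<n + 1}"
      by (simp add: shuffles_def)
    then have "s n \<le> n"
      using permutes_in_image[OF s_perm, of n] by simp
    have "s = shuffle_last n (s n)"
    proof (rule permutes_strict_mono_on_unique[OF s_perm])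
      show "shuffle_last n (s n) permutes {0..<n + 1}" "strict_mono_on {0..<n} (shuffle_last n (s n))"
        using shuffle_last_in_shuffles[OF \<open>s n \<le> n\<close>] by (simp_all add: shuffles_def)
      show "strict_mono_on {0..<n} s"
        using s by (simp add: shuffles_def)
      show "s k = shuffle_last n (s n) k" if "k \<in> {0..<n + 1} - {0..<n}" for k
        using that shuffle_last_last by auto
    qed auto
    then show "s \<in> shuffle_last n ` {..n}"
      using \<open>s n \<le> n\<close> by blast
  qed
qed

lemma shuffles_2_eq:
  assumes "1 \<le> n"
  shows "shuffles 2 (n - 1) = (\<lambda>(j, i). shuffle_pair i j) ` (SIGMA j:{..n}. {..<j})"
proof
  show "(\<lambda>(j, i). shuffle_pair i j) ` (SIGMA j:{..n}. {..<j}) \<subseteq> shuffles 2 (n - 1)"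
    using shuffle_pair_in_shuffles assms by auto
  show "shuffles 2 (n - 1) \<subseteq> (\<lambda>(j, i). shuffle_pair i j) ` (SIGMA j:{..n}. {..<j})"
  proof
    fix s assume s: "s \<in> shuffles 2 (n - 1)"
    have n_eq: "2 + (n - 1) = Suc n"
      using assms by simp
    have s_perm: "s permutes {0..<Suc n}"
      using s n_eq by (simp add: shuffles_def)
    then have "s 1 \<le> n"
      using permutes_in_image[OF s_perm, of 1] assms by simp
    have "s 0 < s 1"
      using s by (simp add: shuffles_def strict_mono_on_def)
    have pair: "shuffle_pair (s 0) (s 1) \<in> shuffles 2 (n - 1)"
      using shuffle_pair_in_shuffles[OF \<open>s 0 < s 1\<close> \<open>s 1 \<le> n\<close> assms] .
    have "s = shuffle_pair (s 0) (s 1)"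
    proof (rule permutes_strict_mono_on_unique[OF s_perm])
      show "shuffle_pair (s 0) (s 1) permutes {0..<Suc n}"
        "strict_mono_on {2..<Suc n} (shuffle_pair (s 0) (s 1))"
        using pair n_eq by (simp_all add: shuffles_def)
      show "strict_mono_on {2..<Suc n} s"
        using s n_eq by (simp add: shuffles_def)
      show "s k = shuffle_pair (s 0) (s 1) k" if "k \<in> {0..<Suc n} - {2..<Suc n}" for k
      proof -
        have "k = 0 \<or> k = 1"
          using that by auto
        then show ?thesis
          using \<open>s 0 < s 1\<close> by (auto simp: shuffle_pair_def cycle_front_apply)
      qed
    qed auto
    then show "s \<in> (\<lambda>(j, i). shuffle_pair i j) ` (SIGMA j:{..n}. {..<j})"
      using \<open>s 1 \<le> n\<close> \<open>s 0 < s 1\<close> by (auto simp: image_iff intro!: bexI[of _ "(s 1, s 0)"])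
  qed
qed

lemma inj_on_shuffle_pair: "inj_on (\<lambda>(j, i). shuffle_pair i j) (SIGMA j:A. {..<j})"
proof (rule inj_onI, clarsimp)
  fix i j i' j' assume "shuffle_pair i j = shuffle_pair i' j'" "i < j" "i' < j'"
  then have "shuffle_pair i j 0 = shuffle_pair i' j' 0" "shuffle_pair i j 1 = shuffle_pair i' j' 1"
    by simp_all
  then show "j = j' \<and> i = i'"
    using \<open>i < j\<close> \<open>i' < j'\<close> by (auto simp: shuffle_pair_def cycle_front_apply)
qed

lemma map_shuffle_last:
  "length us = Suc n \<Longrightarrow> i \<le> n \<Longrightarrow> map (\<lambda>k. us ! shuffle_last n i k) [0..<n] = del_nth i us"
  by (rule nth_equalityI) (auto simp: nth_del_nth shuffle_last_def cycle_front_apply cycle_back_apply)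

lemma map_shuffle_pair:
  "i < j \<Longrightarrow> j < length us \<Longrightarrow>
    map (\<lambda>k. us ! shuffle_pair i j k) [2..<length us] = del_nth i (del_nth j us)"
  by (rule nth_equalityI) (auto simp: nth_del_nth shuffle_pair_def cycle_front_apply)

lemma sum_eq_0_if_involution_neg:
  fixes f :: "'b \<Rightarrow> 'a::comm_ring_1"
  assumes "finite X" "\<And>x. x \<in> X \<Longrightarrow> h x \<in> X" "\<And>x. x \<in> X \<Longrightarrow> h (h x) = x"
    "\<And>x. x \<in> X \<Longrightarrow> h x = x \<Longrightarrow> f x = 0" "\<And>x. x \<in> X \<Longrightarrow> h x \<noteq> x \<Longrightarrow> f (h x) + f x = 0"
  shows "sum f X = 0"
proof -
  have "sum f X = sum f {x\<in>X. h x \<noteq> x}"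
    by (rule sum.mono_neutral_right) (use assms in auto)
  also have "\<dots> = 0"
  proof (rule sum_involution_eq_0)
    fix x assume x: "x \<in> {x \<in> X. h x \<noteq> x}"
    then show "h x \<in> {x \<in> X. h x \<noteq> x}" "h (h x) = x" "h x \<noteq> x"
      using assms(2,3) by fastforce+
    show "f (h x) + f x = 0"
      using x assms(5) by blast
  qed
  finally show ?thesis .
qed

lemma transpose_Suc_less: "Suc p < m \<Longrightarrow> i < m \<Longrightarrow> Transposition.transpose p (Suc p) i < m"
  by (simp add: Transposition.transpose_def)

lemma transpose_Suc_eq_self_iff: "Transposition.transpose p (Suc p) i = i \<longleftrightarrow> i \<noteq> p \<and> i \<noteq> Suc p"
  by (simp add: Transposition.transpose_def)

section \<open>First-order differential operators\<close>

definition commutator :: "('a \<Rightarrow> 'a::comm_ring_1) \<Rightarrow> ('a \<Rightarrow> 'a) \<Rightarrow> 'a \<Rightarrow> 'a" where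
  "commutator u v = (\<lambda>c. u (v c) - v (u c))"

lemma mu_pair: "mu [u, v] = commutator u v"
  by (simp add: mu_def commutator_def)

lemma Diff1_add: "u \<in> Diff1 \<iota> \<Longrightarrow> u (x + y) = u x + u y"
  by (simp add: Diff1_def K_linear_def)

lemma Diff1_scale: "u \<in> Diff1 \<iota> \<Longrightarrow> u (\<iota> c * x) = \<iota> c * u x"
  by (simp add: Diff1_def K_linear_def)

lemma Diff1_zero: "u \<in> Diff1 \<iota> \<Longrightarrow> u 0 = 0"
  using Diff1_add[of u \<iota> 0 0] by simp

lemma Diff1_mult:
  assumes "u \<in> Diff1 \<iota>"
  shows "\<exists>c. \<forall>b. u (a * b) = a * u b + c * b"
proof -
  obtain c where "(\<lambda>b. u (a * b) - a * u b) = mult_op c"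
    using assms by (auto simp: Diff1_def)
  then have "u (a * b) - a * u b = c * b" for b
    by (simp add: mult_op_def fun_eq_iff)
  then show ?thesis
    by (metis diff_eq_eq add.commute)
qed

lemma Diff1I:
  assumes "\<And>x y. u (x + y) = u x + u y" "\<And>c x. u (\<iota> c * x) = \<iota> c * u x"
    and "\<And>a. \<exists>c. \<forall>b. u (a * b) = a * u b + c * b"
  shows "u \<in> Diff1 \<iota>"
proof -
  have "\<exists>c. (\<lambda>b. u (a * b) - a * u b) = mult_op c" for a
    using assms(3)[of a] by (auto simp: mult_op_def fun_eq_iff)
  then show ?thesis
    using assms(1,2) by (auto simp: Diff1_def K_linear_def)
qed

lemma op_add_apply: "op_add u v b = u b + v b"
  by (simp add: op_add_def)

lemma op_scale_apply: "op_scale \<iota> c u b = \<iota> c * u b"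
  by (simp add: op_scale_def)

lemma mult_op_in_Diff1: "mult_op a \<in> Diff1 \<iota>"
  by (rule Diff1I) (auto simp: mult_op_def algebra_simps intro: exI[of _ 0])

lemma op_add_in_Diff1: "u \<in> Diff1 \<iota> \<Longrightarrow> v \<in> Diff1 \<iota> \<Longrightarrow> op_add u v \<in> Diff1 \<iota>"
proof (rule Diff1I)
  assume u: "u \<in> Diff1 \<iota>" and v: "v \<in> Diff1 \<iota>"
  show "op_add u v (x + y) = op_add u v x + op_add u v y" for x y
    by (simp add: op_add_def Diff1_add[OF u] Diff1_add[OF v])
  show "op_add u v (\<iota> c * x) = \<iota> c * op_add u v x" for c x
    by (simp add: op_add_def Diff1_scale[OF u] Diff1_scale[OF v] distrib_left)
  fix a
  obtain c d where "\<forall>b. u (a * b) = a * u b + c * b" "\<forall>b. v (a * b) = a * v b + d * b"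
    using Diff1_mult[OF u] Diff1_mult[OF v] by blast
  then show "\<exists>e. \<forall>b. op_add u v (a * b) = a * op_add u v b + e * b"
    by (intro exI[of _ "c + d"]) (simp add: op_add_def algebra_simps)
qed

lemma commutator_in_Diff1: "u \<in> Diff1 \<iota> \<Longrightarrow> v \<in> Diff1 \<iota> \<Longrightarrow> commutator u v \<in> Diff1 \<iota>"
proof (rule Diff1I)
  assume u: "u \<in> Diff1 \<iota>" and v: "v \<in> Diff1 \<iota>"
  show "commutator u v (x + y) = commutator u v x + commutator u v y" for x y
    by (simp add: commutator_def Diff1_add[OF u] Diff1_add[OF v])
  show "commutator u v (\<iota> c * x) = \<iota> c * commutator u v x" for c x
    by (simp add: commutator_def Diff1_scale[OF u] Diff1_scale[OF v] right_diff_distrib)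
  fix a
  obtain p q where p: "\<forall>b. u (a * b) = a * u b + p * b" and q: "\<forall>b. v (a * b) = a * v b + q * b"
    using Diff1_mult[OF u] Diff1_mult[OF v] by blast
  obtain r s where r: "\<forall>b. u (q * b) = q * u b + r * b" and s: "\<forall>b. v (p * b) = p * v b + s * b"
    using Diff1_mult[OF u] Diff1_mult[OF v] by blast
  show "\<exists>e. \<forall>b. commutator u v (a * b) = a * commutator u v b + e * b"
    by (rule exI[of _ "r - s"])
      (simp only: commutator_def p[rule_format] q[rule_format] r[rule_format] s[rule_format]
        Diff1_add[OF u] Diff1_add[OF v], simp add: algebra_simps)
qed

lemma commutator_mult_op_left: "w \<in> Diff1 \<iota> \<Longrightarrow> \<exists>e. commutator (mult_op a) w = mult_op e"
  using Diff1_mult[of w \<iota> a] by (auto simp: commutator_def mult_op_def fun_eq_iff intro: exI[of _ "- c" for c])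

lemma commutator_mult_op_right: "w \<in> Diff1 \<iota> \<Longrightarrow> \<exists>e. commutator w (mult_op a) = mult_op e"
  using Diff1_mult[of w \<iota> a] by (auto simp: commutator_def mult_op_def fun_eq_iff)

lemma commutator_op_add_left:
  "w \<in> Diff1 \<iota> \<Longrightarrow> commutator (op_add u v) w = op_add (commutator u w) (commutator v w)"
  by (auto simp: commutator_def op_add_def fun_eq_iff Diff1_add)

lemma commutator_op_add_right:
  "w \<in> Diff1 \<iota> \<Longrightarrow> commutator w (op_add u v) = op_add (commutator w u) (commutator w v)"
  by (auto simp: commutator_def op_add_def fun_eq_iff Diff1_add)

lemma commutator_op_scale_left:
  "w \<in> Diff1 \<iota> \<Longrightarrow> commutator (op_scale \<iota> c u) w = op_scale \<iota> c (commutator u w)"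
  by (auto simp: commutator_def op_scale_def fun_eq_iff Diff1_scale right_diff_distrib)

lemma commutator_op_scale_right:
  "w \<in> Diff1 \<iota> \<Longrightarrow> commutator w (op_scale \<iota> c u) = op_scale \<iota> c (commutator w u)"
  by (auto simp: commutator_def op_scale_def fun_eq_iff Diff1_scale right_diff_distrib)

lemma Der1_mult: "X \<in> Der1 \<iota> \<Longrightarrow> X (a * b) = a * X b + X a * b"
  by (simp add: Der1_def)

lemma Der1_subset_Diff1: "Der1 \<iota> \<subseteq> Diff1 \<iota>"
  by (auto intro!: Diff1I simp: Der1_def K_linear_def)

lemma commutator_in_Der1: "X \<in> Der1 \<iota> \<Longrightarrow> Y \<in> Der1 \<iota> \<Longrightarrow> commutator X Y \<in> Der1 \<iota>"
proof -
  assume X: "X \<in> Der1 \<iota>" and Y: "Y \<in> Der1 \<iota>"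
  then have D: "X \<in> Diff1 \<iota>" "Y \<in> Diff1 \<iota>"
    using Der1_subset_Diff1 by blast+
  then have "commutator X Y \<in> Diff1 \<iota>"
    using commutator_in_Diff1 by blast
  moreover have "commutator X Y (a * b) = a * commutator X Y b + commutator X Y a * b" for a b
    by (simp add: commutator_def Der1_mult[OF X] Der1_mult[OF Y] Diff1_add[OF D(1)]
        Diff1_add[OF D(2)] algebra_simps)
  ultimately show ?thesis
    by (simp add: Der1_def Diff1_def)
qed

lemma mult_op_comp_in_Der1: "X \<in> Der1 \<iota> \<Longrightarrow> mult_op a \<circ> X \<in> Der1 \<iota>"
  using Der1_subset_Diff1
  by (auto simp: Der1_def K_linear_def mult_op_def Diff1_add Diff1_scale algebra_simps)

text \<open>Polarization: expand \<open>f\<close> with \<open>u + v\<close> in both positions \<open>i\<close> and \<open>j\<close>.\<close>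

lemma swap_eq_neg_if_vanishing:
  fixes f :: "('a::comm_ring_1 \<Rightarrow> 'a) list \<Rightarrow> 'a \<Rightarrow> 'a"
  assumes closed: "\<And>u v. u \<in> S \<Longrightarrow> v \<in> S \<Longrightarrow> op_add u v \<in> S"
    and add: "\<And>us i u v. length us = k \<Longrightarrow> set us \<subseteq> S \<Longrightarrow> i < k \<Longrightarrow> u \<in> S \<Longrightarrow> v \<in> S \<Longrightarrow>
        f (us[i := op_add u v]) = op_add (f (us[i := u])) (f (us[i := v]))"
    and vanish: "\<And>vs. length vs = k \<Longrightarrow> set vs \<subseteq> S \<Longrightarrow> vs ! i = vs ! j \<Longrightarrow> f vs = (\<lambda>b. 0)"
    and us: "length us = k" "set us \<subseteq> S" "i < k" "j < k" "i \<noteq> j"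
  shows "f (us[i := us ! j, j := us ! i]) b = - f us b"
proof -
  define x y where "x = us ! i" and "y = us ! j"
  have "x \<in> S" "y \<in> S"
    using us by (auto simp: x_def y_def)
  then have S: "x \<in> S" "y \<in> S" "op_add x y \<in> S"
    using closed by blast+
  let ?f = "\<lambda>u v. f (us[i := u, j := v]) b"
  have expand: "?f (op_add u v) w = ?f u w + ?f v w" "?f w (op_add u v) = ?f w u + ?f w v"
    if "u \<in> S" "v \<in> S" "w \<in> S" for u v w
    using that us add[of "us[j := w]" i u v] add[of "us[i := w]" j u v]
    by (simp_all add: set_list_update_subset list_update_swap op_add_def)
  have zero: "?f u u = 0" if "u \<in> S" for u
    using that us vanish[of "us[i := u, j := u]"] by (simp add: set_list_update_subset fun_eq_iff)
  have "0 = ?f (op_add x y) (op_add x y)"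
    using zero S by simp
  also have "\<dots> = (?f x x + ?f y x) + (?f x y + ?f y y)"
    by (simp only: expand S)
  also have "\<dots> = ?f x y + ?f y x"
    using zero S by (simp add: add.commute)
  also have "?f x y = f us b"
    by (simp add: x_def y_def)
  finally show ?thesis
    unfolding x_def y_def by (simp add: eq_neg_iff_add_eq_0 add.commute)
qed

lemma vanishing_if_adjacent_vanishing:
  fixes f :: "('a::comm_ring_1 \<Rightarrow> 'a) list \<Rightarrow> 'a \<Rightarrow> 'a"
  assumes closed: "\<And>u v. u \<in> S \<Longrightarrow> v \<in> S \<Longrightarrow> op_add u v \<in> S"
    and add: "\<And>us i u v. length us = k \<Longrightarrow> set us \<subseteq> S \<Longrightarrow> i < k \<Longrightarrow> u \<in> S \<Longrightarrow> v \<in> S \<Longrightarrow>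
        f (us[i := op_add u v]) = op_add (f (us[i := u])) (f (us[i := v]))"
    and adjacent: "\<And>us i. length us = k \<Longrightarrow> set us \<subseteq> S \<Longrightarrow> Suc i < k \<Longrightarrow> us ! i = us ! Suc i \<Longrightarrow>
        f us = (\<lambda>b. 0)"
  shows "length us = k \<Longrightarrow> set us \<subseteq> S \<Longrightarrow> i < j \<Longrightarrow> j < k \<Longrightarrow> us ! i = us ! j \<Longrightarrow> f us = (\<lambda>b. 0)"
proof (induction j arbitrary: us)
  case 0
  then show ?case by simp
next
  case (Suc j)
  show ?case
  proof (cases "j = i")
    case True
    then show ?thesis using adjacent Suc.prems by simp
  next
    case False
    define vs where "vs = us[j := us ! Suc j, Suc j := us ! j]"
    have vs: "length vs = k" "set vs \<subseteq> S"
      using Suc.prems by (auto simp: vs_def set_list_update_subset)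
    have "f vs = (\<lambda>b. 0)"
      using Suc.IH[OF vs] Suc.prems False by (auto simp: vs_def nth_list_update)
    moreover have "vs[j := vs ! Suc j, Suc j := vs ! j] = us"
      using Suc.prems by (auto simp: vs_def nth_list_update list_update_swap intro!: nth_equalityI)
    moreover have "f (vs[j := vs ! Suc j, Suc j := vs ! j]) b = - f vs b" for b
      by (rule swap_eq_neg_if_vanishing[OF closed add _ vs]) (use adjacent Suc.prems in auto)
    ultimately show ?thesis
      by (metis neg_equal_0_iff_equal)
  qed
qed

section \<open>The Chevalley-Eilenberg differential\<close>

text \<open>\<open>ce_diff \<omega>\<close> is the Chevalley-Eilenberg differential of the cochain \<open>\<omega>\<close> of the Lie
  algebra \<open>End(A)\<close> with coefficients in \<open>End(A)\<close>, on which it acts by commutators.\<close>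

definition ce_action_term ::
    "(('a::comm_ring_1 \<Rightarrow> 'a) list \<Rightarrow> ('a \<Rightarrow> 'a)) \<Rightarrow> ('a \<Rightarrow> 'a) list \<Rightarrow> nat \<Rightarrow> 'a \<Rightarrow> 'a" where
  "ce_action_term \<omega> us i = commutator (us ! i) (\<omega> (del_nth i us))"

definition ce_bracket_term ::
    "(('a::comm_ring_1 \<Rightarrow> 'a) list \<Rightarrow> ('a \<Rightarrow> 'a)) \<Rightarrow> ('a \<Rightarrow> 'a) list \<Rightarrow> nat \<Rightarrow> nat \<Rightarrow> 'a \<Rightarrow> 'a" where
  "ce_bracket_term \<omega> us i j = \<omega> (commutator (us ! i) (us ! j) # del_nth i (del_nth j us))"

definition ce_diff :: "(('a::comm_ring_1 \<Rightarrow> 'a) list \<Rightarrow> ('a \<Rightarrow> 'a)) \<Rightarrow> ('a \<Rightarrow> 'a) list \<Rightarrow> 'a \<Rightarrow> 'a" where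
  "ce_diff \<omega> us = (\<lambda>b.
     (\<Sum>i<length us. (-1) ^ i * ce_action_term \<omega> us i b) +
     (\<Sum>j<length us. \<Sum>i<j. (-1) ^ (i + j) * ce_bracket_term \<omega> us i j b))"

lemma comp_prod_mu_form:
  assumes "length us = Suc n"
  shows "comp_prod 2 n mu \<omega> us =
    (\<lambda>b. \<Sum>i<Suc n. (-1) ^ Suc (i + n) * ce_action_term \<omega> us i b)"
proof -
  define F where
    "F s b = of_int (sign s) * mu [\<omega> (map (\<lambda>i. us ! s i) [0..<n]), us ! s n] b" for s b
  have inj: "inj_on (shuffle_last n) {..n}"
    by (metis inj_onI shuffle_last_last)
  have "comp_prod 2 n mu \<omega> us = (\<lambda>b. \<Sum>s\<in>shuffles n 1. F s b)"
    unfolding comp_prod_def F_def by simp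
  also have "\<dots> = (\<lambda>b. \<Sum>i\<in>{..n}. F (shuffle_last n i) b)"
    by (simp only: shuffles_1_eq sum.reindex[OF inj] o_def)
  also have "\<dots> = (\<lambda>b. \<Sum>i<Suc n. (-1) ^ Suc (i + n) * ce_action_term \<omega> us i b)"
    unfolding F_def lessThan_Suc_atMost using assms
    by (simp add: map_shuffle_last shuffle_last_last sign_shuffle_last mu_pair
        ce_action_term_def commutator_def algebra_simps)
  finally show ?thesis .
qed

lemma comp_prod_form_mu:
  assumes "length us = Suc n" "1 \<le> n"
  shows "comp_prod n 2 \<omega> mu us =
    (\<lambda>b. \<Sum>j<Suc n. \<Sum>i<j. (-1) ^ Suc (i + j) * ce_bracket_term \<omega> us i j b)"
proof -
  define F where "F s b = of_int (sign s) *
      \<omega> (mu (map (\<lambda>i. us ! s i) [0..<2]) # map (\<lambda>i. us ! s i) [2..<Suc n]) b" for s b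
  have "comp_prod n 2 \<omega> mu us = (\<lambda>b. \<Sum>s\<in>shuffles 2 (n - 1). F s b)"
    unfolding comp_prod_def F_def using assms by simp
  also have "\<dots> = (\<lambda>b. \<Sum>(j, i)\<in>(SIGMA j:{..n}. {..<j}). F (shuffle_pair i j) b)"
    unfolding shuffles_2_eq[OF assms(2)] sum.reindex[OF inj_on_shuffle_pair]
    by (simp add: o_def case_prod_beta')
  also have "\<dots> = (\<lambda>b. \<Sum>(j, i)\<in>(SIGMA j:{..n}. {..<j}).
      (-1) ^ Suc (i + j) * ce_bracket_term \<omega> us i j b)"
  proof (rule ext, rule sum.cong, simp, clarify)
    fix b j i assume "j \<le> n" "i < j"
    then have "map (\<lambda>k. us ! shuffle_pair i j k) [0..<2] = [us ! i, us ! j]"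
      "map (\<lambda>k. us ! shuffle_pair i j k) [2..<Suc n] = del_nth i (del_nth j us)"
      using map_shuffle_pair[of i j us] assms
      by (simp_all add: upt_rec shuffle_pair_def cycle_front_apply)
    then show "F (shuffle_pair i j) b = (-1) ^ Suc (i + j) * ce_bracket_term \<omega> us i j b"
      unfolding F_def by (simp add: sign_shuffle_pair mu_pair ce_bracket_term_def)
  qed
  also have "\<dots> = (\<lambda>b. \<Sum>j<Suc n. \<Sum>i<j. (-1) ^ Suc (i + j) * ce_bracket_term \<omega> us i j b)"
    by (subst sum.Sigma) (auto simp: lessThan_Suc_atMost)
  finally show ?thesis .
qed

lemma bracket_mu_eq_neg_ce_diff:
  assumes "length us = Suc n" "1 \<le> n"
  shows "bracket 2 n mu \<omega> us = (\<lambda>b. - ce_diff \<omega> us b)"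
proof
  fix b
  have sign: "(-1::'a) ^ ((2 + 1) * n) * (-1) ^ Suc (i + n) = - ((-1) ^ i)" for i
  proof -
    have "(2 + 1) * n + Suc (i + n) = 2 * (2 * n) + Suc i"
      by simp
    then have "(-1::'a) ^ ((2 + 1) * n) * (-1) ^ Suc (i + n) = (-1) ^ (2 * (2 * n)) * (-1) ^ Suc i"
      by (metis power_add)
    then show ?thesis
      by simp
  qed
  have "(-1) ^ ((2 + 1) * n) * comp_prod 2 n mu \<omega> us b =
      - (\<Sum>i<Suc n. (-1) ^ i * ce_action_term \<omega> us i b)"
    unfolding comp_prod_mu_form[OF assms(1)] sum_distrib_left
    by (simp only: mult.assoc[symmetric] sign mult_minus_left sum_negf)
  moreover have "(-1) ^ 2 * comp_prod n 2 \<omega> mu us b =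
      - (\<Sum>j<Suc n. \<Sum>i<j. (-1) ^ (i + j) * ce_bracket_term \<omega> us i j b)"
    unfolding comp_prod_form_mu[OF assms] by (simp add: sum_negf)
  ultimately show "bracket 2 n mu \<omega> us b = - ce_diff \<omega> us b"
    unfolding bracket_def ce_diff_def assms(1) by simp
qed

lemma action_term_adjacent_pair:
  "Suc p < length us \<Longrightarrow> us ! p = us ! Suc p \<Longrightarrow> ce_action_term \<omega> us (Suc p) = ce_action_term \<omega> us p"
  by (simp add: ce_action_term_def del_nth_adjacent_eq)

lemma bracket_term_adjacent_left:
  "i < p \<Longrightarrow> Suc p < length us \<Longrightarrow> us ! p = us ! Suc p \<Longrightarrow>
    ce_bracket_term \<omega> us i (Suc p) = ce_bracket_term \<omega> us i p"
  by (simp add: ce_bracket_term_def del_nth_adjacent_eq)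

lemma bracket_term_adjacent_right:
  assumes "Suc p < j" "j < length us" "us ! p = us ! Suc p"
  shows "ce_bracket_term \<omega> us (Suc p) j = ce_bracket_term \<omega> us p j"
proof -
  have "del_nth j us ! p = del_nth j us ! Suc p"
    using assms by (simp add: nth_del_nth)
  then have "del_nth p (del_nth j us) = del_nth (Suc p) (del_nth j us)"
    using assms by (simp add: del_nth_adjacent_eq)
  then show ?thesis
    using assms by (simp add: ce_bracket_term_def)
qed

lemma d_val_eq:
  "d_val \<omega> Xs =
    (\<Sum>i<length Xs. (-1) ^ i * (Xs ! i) (\<omega> (del_nth i Xs) 1)) +
    (\<Sum>j<length Xs. \<Sum>i<j. (-1) ^ (i + j) * ce_bracket_term \<omega> Xs i j 1)"
  by (simp add: d_val_def ce_bracket_term_def commutator_def)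

section \<open>Forms\<close>

locale Omega_form =
  fixes \<iota> :: "'k::field \<Rightarrow> 'a::comm_ring_1" and n :: nat and \<omega> :: "('a \<Rightarrow> 'a) list \<Rightarrow> 'a \<Rightarrow> 'a"
  assumes n_pos: "1 \<le> n" and Omega: "Omega \<iota> n \<omega>"
begin

lemma form_mult_op_valued:
  assumes "length us = n" "set us \<subseteq> Diff1 \<iota>"
  obtains c where "\<And>b. \<omega> us b = c * b"
  using assms Omega by (force simp: Omega_def mult_op_def)

lemma form_vanish: "length us = n \<Longrightarrow> set us \<subseteq> Diff1 \<iota> \<Longrightarrow> mult_op a \<in> set us \<Longrightarrow> \<omega> us b = 0"
  using Omega unfolding Omega_def by (metis in_set_conv_nth rangeI)

lemma form_add:
  "length us = n \<Longrightarrow> set us \<subseteq> Diff1 \<iota> \<Longrightarrow> i < n \<Longrightarrow> u \<in> Diff1 \<iota> \<Longrightarrow> v \<in> Diff1 \<iota> \<Longrightarrow>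
    \<omega> (us[i := op_add u v]) b = \<omega> (us[i := u]) b + \<omega> (us[i := v]) b"
  using Omega by (simp add: Omega_def Lk_def op_add_def)

lemma form_scale:
  "length us = n \<Longrightarrow> set us \<subseteq> Diff1 \<iota> \<Longrightarrow> i < n \<Longrightarrow> u \<in> Diff1 \<iota> \<Longrightarrow>
    \<omega> (us[i := op_scale \<iota> c u]) b = \<iota> c * \<omega> (us[i := u]) b"
  using Omega by (simp add: Omega_def Lk_def op_scale_def)

lemma form_add_hd:
  "length vs = n - 1 \<Longrightarrow> set vs \<subseteq> Diff1 \<iota> \<Longrightarrow> u \<in> Diff1 \<iota> \<Longrightarrow> v \<in> Diff1 \<iota> \<Longrightarrow>
    \<omega> (op_add u v # vs) b = \<omega> (u # vs) b + \<omega> (v # vs) b"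
  using form_add[of "u # vs" 0 u v b] n_pos by simp

lemma form_scale_hd:
  "length vs = n - 1 \<Longrightarrow> set vs \<subseteq> Diff1 \<iota> \<Longrightarrow> u \<in> Diff1 \<iota> \<Longrightarrow>
    \<omega> (op_scale \<iota> c u # vs) b = \<iota> c * \<omega> (u # vs) b"
  using form_scale[of "u # vs" 0 u c b] n_pos by simp

lemma form_alternating:
  "length us = n \<Longrightarrow> set us \<subseteq> Diff1 \<iota> \<Longrightarrow> i < j \<Longrightarrow> j < n \<Longrightarrow> us ! i = us ! j \<Longrightarrow> \<omega> us b = 0"
  using Omega unfolding Omega_def Lk_def by metis

lemma form_swap:
  assumes "length us = n" "set us \<subseteq> Diff1 \<iota>" "i < n" "j < n" "i \<noteq> j"
  shows "\<omega> (us[i := us ! j, j := us ! i]) b = - \<omega> us b"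
proof (rule swap_eq_neg_if_vanishing[of "Diff1 \<iota>" n \<omega>])
  show "\<omega> vs = (\<lambda>b. 0)" if "length vs = n" "set vs \<subseteq> Diff1 \<iota>" "vs ! i = vs ! j" for vs
  proof
    fix b
    show "\<omega> vs b = 0"
      using that assms form_alternating[of vs i j b] form_alternating[of vs j i b]
      by (cases "i < j") auto
  qed
qed (use assms form_add op_add_in_Diff1 in \<open>auto simp: fun_eq_iff op_add_def\<close>)

lemma form_A_linear:
  "length us = n \<Longrightarrow> set us \<subseteq> Der1 \<iota> \<Longrightarrow> \<omega> (us[0 := mult_op a \<circ> us ! 0]) b = a * \<omega> us b"
  using Omega n_pos by (auto simp: Omega_def mult_op_def dest: fun_cong)

lemma form_A_linear_second:
  assumes us: "length us = n" "set us \<subseteq> Der1 \<iota>" and "2 \<le> n"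
  shows "\<omega> (us[1 := mult_op a \<circ> us ! 1]) b = a * \<omega> us b"
proof -
  have "us ! 0 \<in> set us" "us ! 1 \<in> set us"
    using us(1) \<open>2 \<le> n\<close> by simp_all
  then have "us ! 0 \<in> Der1 \<iota>" "us ! 1 \<in> Der1 \<iota>"
    using us(2) by blast+
  then have D: "set us \<subseteq> Diff1 \<iota>" "us ! 0 \<in> Diff1 \<iota>" "mult_op a \<circ> us ! 1 \<in> Diff1 \<iota>"
    using us(2) mult_op_comp_in_Der1 Der1_subset_Diff1 by blast+
  define vs where "vs = us[0 := us ! 1, 1 := us ! 0]"
  define ws where "ws = us[0 := mult_op a \<circ> us ! 1, 1 := us ! 0]"
  have vs: "length vs = n" "set vs \<subseteq> Der1 \<iota>"
    using us \<open>2 \<le> n\<close> by (auto simp: vs_def set_list_update_subset)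
  have ws: "length ws = n" "set ws \<subseteq> Diff1 \<iota>"
    using us D unfolding ws_def by (simp_all add: set_list_update_subset)
  have "ws = vs[0 := mult_op a \<circ> vs ! 0]"
    using \<open>2 \<le> n\<close> us(1) by (simp add: ws_def vs_def list_update_swap[where i = "Suc 0" and i' = 0])
  have "ws[0 := ws ! 1, 1 := ws ! 0] = us[1 := mult_op a \<circ> us ! 1]"
    using \<open>2 \<le> n\<close> us(1) by (simp add: ws_def list_update_swap[where i = "Suc 0" and i' = 0])
  then have "\<omega> (us[1 := mult_op a \<circ> us ! 1]) b = - \<omega> ws b"
    using form_swap[OF ws, of 0 1 b] \<open>2 \<le> n\<close> by simp
  moreover have "\<omega> ws b = a * \<omega> vs b"
    unfolding \<open>ws = vs[0 := mult_op a \<circ> vs ! 0]\<close> by (rule form_A_linear[OF vs])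
  moreover have "\<omega> vs b = - \<omega> us b"
    unfolding vs_def by (rule form_swap) (use D us \<open>2 \<le> n\<close> in auto)
  ultimately show ?thesis
    by simp
qed

lemma bracket_term_args:
  assumes "length us = Suc n" "set us \<subseteq> S" "i < j" "j < Suc n" "c \<in> S"
  shows "length (c # del_nth i (del_nth j us)) = n" "set (c # del_nth i (del_nth j us)) \<subseteq> S"
  using assms n_pos by (simp_all add: set_del_nth_subset)

lemma action_term_add:
  assumes us: "length us = Suc n" "set us \<subseteq> Diff1 \<iota>" and "p < Suc n" "i < Suc n"
    and uv: "u \<in> Diff1 \<iota>" "v \<in> Diff1 \<iota>"
  shows "ce_action_term \<omega> (us[p := op_add u v]) i b =
    ce_action_term \<omega> (us[p := u]) i b + ce_action_term \<omega> (us[p := v]) i b"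
proof (cases "i = p")
  case True
  obtain c where c: "\<And>b. \<omega> (del_nth p us) b = c * b"
    using form_mult_op_valued length_set_del_nth[OF us \<open>p < Suc n\<close>] by metis
  have "del_nth p (us[p := x]) = del_nth p us" for x
    using us \<open>p < Suc n\<close> by (simp add: del_nth_list_update)
  then show ?thesis
    using True us \<open>p < Suc n\<close>
    by (simp add: ce_action_term_def commutator_def c op_add_def algebra_simps)
next
  case False
  obtain q where q: "q < n" "\<And>x. del_nth i (us[p := x]) = (del_nth i us)[q := x]"
    using del_nth_list_update_other[of i us p] us \<open>p < Suc n\<close> \<open>i < Suc n\<close> False by auto
  have "us ! i \<in> Diff1 \<iota>" "p \<noteq> i"
    using us \<open>i < Suc n\<close> False by auto
  then show ?thesis
    by (simp add: ce_action_term_def commutator_def q(2)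
        form_add[OF length_set_del_nth[OF us \<open>i < Suc n\<close>] q(1) uv] Diff1_add)
qed

lemma action_term_scale:
  assumes us: "length us = Suc n" "set us \<subseteq> Diff1 \<iota>" and "p < Suc n" "i < Suc n"
    and u: "u \<in> Diff1 \<iota>"
  shows "ce_action_term \<omega> (us[p := op_scale \<iota> c u]) i b = \<iota> c * ce_action_term \<omega> (us[p := u]) i b"
proof (cases "i = p")
  case True
  obtain d where d: "\<And>b. \<omega> (del_nth p us) b = d * b"
    using form_mult_op_valued length_set_del_nth[OF us \<open>p < Suc n\<close>] by metis
  have "del_nth p (us[p := x]) = del_nth p us" for x
    using us \<open>p < Suc n\<close> by (simp add: del_nth_list_update)
  then show ?thesis
    using True us \<open>p < Suc n\<close>
    by (simp add: ce_action_term_def commutator_def d op_scale_def algebra_simps)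
next
  case False
  obtain q where q: "q < n" "\<And>x. del_nth i (us[p := x]) = (del_nth i us)[q := x]"
    using del_nth_list_update_other[of i us p] us \<open>p < Suc n\<close> \<open>i < Suc n\<close> False by auto
  have "us ! i \<in> Diff1 \<iota>" "p \<noteq> i"
    using us \<open>i < Suc n\<close> False by auto
  then show ?thesis
    by (simp add: ce_action_term_def commutator_def q(2)
        form_scale[OF length_set_del_nth[OF us \<open>i < Suc n\<close>] q(1) u] Diff1_scale right_diff_distrib)
qed

lemma bracket_term_add:
  assumes us: "length us = Suc n" "set us \<subseteq> Diff1 \<iota>" and "p < Suc n" "i < j" "j < Suc n"
    and uv: "u \<in> Diff1 \<iota>" "v \<in> Diff1 \<iota>"
  shows "ce_bracket_term \<omega> (us[p := op_add u v]) i j b =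
    ce_bracket_term \<omega> (us[p := u]) i j b + ce_bracket_term \<omega> (us[p := v]) i j b"
proof -
  have R: "length (del_nth i (del_nth j us)) = n - 1" "set (del_nth i (del_nth j us)) \<subseteq> Diff1 \<iota>"
    using us \<open>i < j\<close> \<open>j < Suc n\<close> by (simp_all add: set_del_nth_subset)
  have D: "us ! i \<in> Diff1 \<iota>" "us ! j \<in> Diff1 \<iota>"
    using us \<open>i < j\<close> \<open>j < Suc n\<close> by auto
  consider "p = i" | "p = j" | "p \<noteq> i" "p \<noteq> j"
    by blast
  then show ?thesis
  proof cases
    case 1
    then show ?thesis
      using us \<open>i < j\<close> \<open>j < Suc n\<close>
      by (simp add: ce_bracket_term_def del_nth2_list_update_same commutator_op_add_left[OF D(2)]
          form_add_hd[OF R commutator_in_Diff1[OF uv(1) D(2)] commutator_in_Diff1[OF uv(2) D(2)]])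
  next
    case 2
    then show ?thesis
      using us \<open>i < j\<close> \<open>j < Suc n\<close>
      by (simp add: ce_bracket_term_def del_nth2_list_update_same commutator_op_add_right[OF D(1)]
          form_add_hd[OF R commutator_in_Diff1[OF D(1) uv(1)] commutator_in_Diff1[OF D(1) uv(2)]])
  next
    case 3
    obtain q where q: "q < n - 1"
      "\<And>x. del_nth i (del_nth j (us[p := x])) = (del_nth i (del_nth j us))[q := x]"
      using del_nth2_list_update_other[of i j us p] us \<open>i < j\<close> \<open>j < Suc n\<close> \<open>p < Suc n\<close> 3 by auto
    have "Suc q < n"
      using q(1) by simp
    with bracket_term_args[OF us \<open>i < j\<close> \<open>j < Suc n\<close> commutator_in_Diff1[OF D]]
    have "\<omega> ((commutator (us ! i) (us ! j) # del_nth i (del_nth j us))[Suc q := op_add u v]) b =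
        \<omega> ((commutator (us ! i) (us ! j) # del_nth i (del_nth j us))[Suc q := u]) b +
        \<omega> ((commutator (us ! i) (us ! j) # del_nth i (del_nth j us))[Suc q := v]) b"
      using uv by (rule form_add)
    then show ?thesis
      using 3 by (simp add: ce_bracket_term_def q(2))
  qed
qed

lemma bracket_term_scale:
  assumes us: "length us = Suc n" "set us \<subseteq> Diff1 \<iota>" and "p < Suc n" "i < j" "j < Suc n"
    and u: "u \<in> Diff1 \<iota>"
  shows "ce_bracket_term \<omega> (us[p := op_scale \<iota> c u]) i j b = \<iota> c * ce_bracket_term \<omega> (us[p := u]) i j b"
proof -
  have R: "length (del_nth i (del_nth j us)) = n - 1" "set (del_nth i (del_nth j us)) \<subseteq> Diff1 \<iota>"
    using us \<open>i < j\<close> \<open>j < Suc n\<close> by (simp_all add: set_del_nth_subset)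
  have D: "us ! i \<in> Diff1 \<iota>" "us ! j \<in> Diff1 \<iota>"
    using us \<open>i < j\<close> \<open>j < Suc n\<close> by auto
  consider "p = i" | "p = j" | "p \<noteq> i" "p \<noteq> j"
    by blast
  then show ?thesis
  proof cases
    case 1
    then show ?thesis
      using us \<open>i < j\<close> \<open>j < Suc n\<close>
      by (simp add: ce_bracket_term_def del_nth2_list_update_same commutator_op_scale_left[OF D(2)]
          form_scale_hd[OF R commutator_in_Diff1[OF u D(2)]])
  next
    case 2
    then show ?thesis
      using us \<open>i < j\<close> \<open>j < Suc n\<close>
      by (simp add: ce_bracket_term_def del_nth2_list_update_same commutator_op_scale_right[OF D(1)]
          form_scale_hd[OF R commutator_in_Diff1[OF D(1) u]])
  next
    case 3
    obtain q where q: "q < n - 1"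
      "\<And>x. del_nth i (del_nth j (us[p := x])) = (del_nth i (del_nth j us))[q := x]"
      using del_nth2_list_update_other[of i j us p] us \<open>i < j\<close> \<open>j < Suc n\<close> \<open>p < Suc n\<close> 3 by auto
    have "Suc q < n"
      using q(1) by simp
    with bracket_term_args[OF us \<open>i < j\<close> \<open>j < Suc n\<close> commutator_in_Diff1[OF D]]
    have "\<omega> ((commutator (us ! i) (us ! j) # del_nth i (del_nth j us))[Suc q := op_scale \<iota> c u]) b =
        \<iota> c * \<omega> ((commutator (us ! i) (us ! j) # del_nth i (del_nth j us))[Suc q := u]) b"
      using u by (rule form_scale)
    then show ?thesis
      using 3 by (simp add: ce_bracket_term_def q(2))
  qed
qed

lemma ce_diff_add:
  assumes us: "length us = Suc n" "set us \<subseteq> Diff1 \<iota>" and p: "p < Suc n"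
    and uv: "u \<in> Diff1 \<iota>" "v \<in> Diff1 \<iota>"
  shows "ce_diff \<omega> (us[p := op_add u v]) = op_add (ce_diff \<omega> (us[p := u])) (ce_diff \<omega> (us[p := v]))"
proof
  fix b
  show "ce_diff \<omega> (us[p := op_add u v]) b = op_add (ce_diff \<omega> (us[p := u])) (ce_diff \<omega> (us[p := v])) b"
    unfolding ce_diff_def length_list_update us(1)
    by (simp add: action_term_add[OF us p _ uv] bracket_term_add[OF us p _ _ uv] op_add_apply
        distrib_left sum.distrib del: sum.lessThan_Suc)
qed

lemma ce_diff_scale:
  assumes us: "length us = Suc n" "set us \<subseteq> Diff1 \<iota>" and p: "p < Suc n"
    and u: "u \<in> Diff1 \<iota>"
  shows "ce_diff \<omega> (us[p := op_scale \<iota> c u]) = op_scale \<iota> c (ce_diff \<omega> (us[p := u]))"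
proof
  fix b
  show "ce_diff \<omega> (us[p := op_scale \<iota> c u]) b = op_scale \<iota> c (ce_diff \<omega> (us[p := u])) b"
    unfolding ce_diff_def length_list_update us(1)
    by (simp add: action_term_scale[OF us p _ u] bracket_term_scale[OF us p _ _ u] op_scale_apply
        distrib_left sum_distrib_left mult.left_commute del: sum.lessThan_Suc)
qed

lemma action_term_mult_op:
  assumes us: "length us = Suc n" "set us \<subseteq> Diff1 \<iota>" and "i < Suc n"
  shows "ce_action_term \<omega> us i b = ce_action_term \<omega> us i 1 * b"
proof -
  obtain c where c: "\<And>b. \<omega> (del_nth i us) b = c * b"
    using form_mult_op_valued length_set_del_nth[OF us \<open>i < Suc n\<close>] by metis
  have "us ! i \<in> Diff1 \<iota>"
    using us \<open>i < Suc n\<close> by auto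
  then obtain q where "\<And>b. (us ! i) (c * b) = c * (us ! i) b + q * b"
    using Diff1_mult by blast
  then show ?thesis
    by (simp add: ce_action_term_def commutator_def c algebra_simps)
qed

lemma bracket_term_mult_op:
  assumes us: "length us = Suc n" "set us \<subseteq> Diff1 \<iota>" and "i < j" "j < Suc n"
  shows "ce_bracket_term \<omega> us i j b = ce_bracket_term \<omega> us i j 1 * b"
proof -
  have "commutator (us ! i) (us ! j) \<in> Diff1 \<iota>"
    using us \<open>i < j\<close> \<open>j < Suc n\<close> by (auto intro!: commutator_in_Diff1)
  then obtain c where "\<And>b. ce_bracket_term \<omega> us i j b = c * b"
    unfolding ce_bracket_term_def
    using form_mult_op_valued bracket_term_args[OF us \<open>i < j\<close> \<open>j < Suc n\<close>] by metis
  then show ?thesis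
    by simp
qed

lemma ce_diff_mult_op:
  assumes us: "length us = Suc n" "set us \<subseteq> Diff1 \<iota>"
  shows "ce_diff \<omega> us = mult_op (ce_diff \<omega> us 1)"
proof
  fix b
  show "ce_diff \<omega> us b = mult_op (ce_diff \<omega> us 1) b"
    unfolding ce_diff_def mult_op_def us(1)
    by (simp add: action_term_mult_op[OF us, of _ b] bracket_term_mult_op[OF us, of _ _ b]
        sum_distrib_right distrib_right mult.assoc del: sum.lessThan_Suc)
qed

lemma action_term_vanish:
  assumes us: "length us = Suc n" "set us \<subseteq> Diff1 \<iota>" and "i < Suc n" "p < Suc n"
    and "us ! p = mult_op a"
  shows "ce_action_term \<omega> us i b = 0"
proof (cases "i = p")
  case True
  obtain c where "\<And>b. \<omega> (del_nth i us) b = c * b"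
    using form_mult_op_valued length_set_del_nth[OF us \<open>i < Suc n\<close>] by metis
  then show ?thesis
    using True \<open>us ! p = mult_op a\<close> by (simp add: ce_action_term_def commutator_def mult_op_def)
next
  case False
  have "mult_op a \<in> set (del_nth i us)"
    using nth_in_set_del_nth[of i us p] us \<open>i < Suc n\<close> \<open>p < Suc n\<close> False \<open>us ! p = mult_op a\<close>
    by auto
  then have "\<omega> (del_nth i us) x = 0" for x
    using form_vanish length_set_del_nth[OF us \<open>i < Suc n\<close>] by blast
  moreover have "us ! i \<in> Diff1 \<iota>"
    using us \<open>i < Suc n\<close> by auto
  ultimately show ?thesis
    by (simp add: ce_action_term_def commutator_def Diff1_zero)
qed

lemma bracket_term_vanish:
  assumes us: "length us = Suc n" "set us \<subseteq> Diff1 \<iota>" and "i < j" "j < Suc n" "p < Suc n"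
    and "us ! p = mult_op a"
  shows "ce_bracket_term \<omega> us i j b = 0"
proof -
  have D: "us ! i \<in> Diff1 \<iota>" "us ! j \<in> Diff1 \<iota>"
    using us \<open>i < j\<close> \<open>j < Suc n\<close> by auto
  have "\<exists>e. mult_op e \<in> set (commutator (us ! i) (us ! j) # del_nth i (del_nth j us))"
  proof -
    consider "p = i" | "p = j" | "p \<noteq> i" "p \<noteq> j"
      by blast
    then show ?thesis
    proof cases
      case 1
      obtain e where "commutator (mult_op a) (us ! j) = mult_op e"
        using commutator_mult_op_left[OF D(2)] by blast
      then show ?thesis
        using 1 \<open>us ! p = mult_op a\<close> by (intro exI[of _ e]) simp
    next
      case 2
      obtain e where "commutator (us ! i) (mult_op a) = mult_op e"
        using commutator_mult_op_right[OF D(1)] by blast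
      then show ?thesis
        using 2 \<open>us ! p = mult_op a\<close> by (intro exI[of _ e]) simp
    next
      case 3
      then show ?thesis
        using nth_in_set_del_nth2[of i j us p] us \<open>i < j\<close> \<open>j < Suc n\<close> \<open>p < Suc n\<close>
          \<open>us ! p = mult_op a\<close>
        by auto
    qed
  qed
  then show ?thesis
    unfolding ce_bracket_term_def
    using form_vanish bracket_term_args[OF us \<open>i < j\<close> \<open>j < Suc n\<close> commutator_in_Diff1[OF D]] by blast
qed

lemma ce_diff_vanish:
  assumes "length us = Suc n" "set us \<subseteq> Diff1 \<iota>" "p < Suc n" "us ! p = mult_op a"
  shows "ce_diff \<omega> us b = 0"
  unfolding ce_diff_def
  using assms by (simp add: action_term_vanish[OF assms(1,2) _ assms(3,4)]
      bracket_term_vanish[OF assms(1,2) _ _ assms(3,4)] del: sum.lessThan_Suc)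

context
  fixes us p
  assumes us: "length us = Suc n" "set us \<subseteq> Diff1 \<iota>"
    and adjacent: "Suc p < Suc n" "us ! p = us ! Suc p"
begin

lemma action_term_adjacent_other:
  assumes "i < Suc n" "i \<noteq> p" "i \<noteq> Suc p"
  shows "ce_action_term \<omega> us i b = 0"
proof -
  define q where "q = (if i < p then p - 1 else p)"
  have "Suc q < length (del_nth i us)" "del_nth i us ! q = del_nth i us ! Suc q"
    using nth_del_nth_adjacent[of p us i] us adjacent assms unfolding q_def by auto
  then have "\<omega> (del_nth i us) x = 0" for x
    using form_alternating[OF length_set_del_nth[OF us \<open>i < Suc n\<close>], of q "Suc q" x]
      length_set_del_nth[OF us \<open>i < Suc n\<close>] by simp
  moreover have "us ! i \<in> Diff1 \<iota>"
    using us \<open>i < Suc n\<close> by auto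
  ultimately show ?thesis
    by (simp add: ce_action_term_def commutator_def Diff1_zero)
qed

lemma bracket_term_adjacent_other:
  assumes "i < j" "j < Suc n" "i \<noteq> p" "i \<noteq> Suc p" "j \<noteq> p" "j \<noteq> Suc p"
  shows "ce_bracket_term \<omega> us i j b = 0"
proof -
  define q1 where "q1 = (if j < p then p - 1 else p)"
  have q1: "Suc q1 < length (del_nth j us)" "del_nth j us ! q1 = del_nth j us ! Suc q1"
    using nth_del_nth_adjacent[of p us j] us adjacent assms unfolding q1_def by auto
  define q2 where "q2 = (if i < q1 then q1 - 1 else q1)"
  have "i \<noteq> q1" "i \<noteq> Suc q1"
    using assms by (auto simp: q1_def)
  then have q2: "Suc q2 < length (del_nth i (del_nth j us))"
      "del_nth i (del_nth j us) ! q2 = del_nth i (del_nth j us) ! Suc q2"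
    using nth_del_nth_adjacent[OF q1] assms us unfolding q2_def by auto
  have "us ! i \<in> Diff1 \<iota>" "us ! j \<in> Diff1 \<iota>"
    using us assms by auto
  note args = bracket_term_args[OF us \<open>i < j\<close> \<open>j < Suc n\<close> commutator_in_Diff1[OF this]]
  have "\<omega> (commutator (us ! i) (us ! j) # del_nth i (del_nth j us)) b = 0"
    by (rule form_alternating[OF args, of "Suc q2" "Suc (Suc q2)"]) (use q2 args in auto)
  then show ?thesis
    by (simp add: ce_bracket_term_def)
qed

lemma bracket_term_adjacent_self: "ce_bracket_term \<omega> us p (Suc p) b = 0"
proof -
  have "commutator (us ! p) (us ! Suc p) = mult_op 0"
    using adjacent by (simp add: commutator_def mult_op_def fun_eq_iff)
  moreover note args = bracket_term_args[OF us lessI adjacent(1) mult_op_in_Diff1[of 0 \<iota>]]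
  then have "\<omega> (mult_op 0 # del_nth p (del_nth (Suc p) us)) b = 0"
    by (rule form_vanish[where a = 0]) simp
  ultimately show ?thesis
    by (simp add: ce_bracket_term_def)
qed

lemma action_sum_adjacent_eq_0: "(\<Sum>i<Suc n. (-1) ^ i * ce_action_term \<omega> us i b) = 0"
proof (rule sum_eq_0_if_involution_neg[where h = "Transposition.transpose p (Suc p)"])
  fix i assume "i \<in> {..<Suc n}"
  then show "Transposition.transpose p (Suc p) i \<in> {..<Suc n}"
    using adjacent(1) by (simp add: transpose_Suc_less)
  show "(-1) ^ i * ce_action_term \<omega> us i b = 0" if "Transposition.transpose p (Suc p) i = i"
    using that \<open>i \<in> {..<Suc n}\<close> action_term_adjacent_other by (simp add: transpose_Suc_eq_self_iff)
  show "(-1) ^ Transposition.transpose p (Suc p) i * ce_action_term \<omega> us (Transposition.transpose p (Suc p) i) b +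
      (-1) ^ i * ce_action_term \<omega> us i b = 0" if "Transposition.transpose p (Suc p) i \<noteq> i"
  proof -
    have "i = p \<or> i = Suc p"
      using that by (simp add: transpose_Suc_eq_self_iff)
    then show ?thesis
      using action_term_adjacent_pair[of p us \<omega>] us adjacent by auto
  qed
qed simp_all

lemma bracket_sum_adjacent_eq_0:
  "(\<Sum>j<Suc n. \<Sum>i<j. (-1) ^ (i + j) * ce_bracket_term \<omega> us i j b) = 0"
proof -
  let ?t = "Transposition.transpose p (Suc p)"
  define h where "h = (\<lambda>(j, i). if (j, i) = (Suc p, p) then (j, i) else (?t j, ?t i))"
  define f where "f = (\<lambda>(j, i). (-1) ^ (i + j) * ce_bracket_term \<omega> us i j b)"
  have "(\<Sum>j<Suc n. \<Sum>i<j. (-1) ^ (i + j) * ce_bracket_term \<omega> us i j b) =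
      sum f (SIGMA j:{..<Suc n}. {..<j})"
    unfolding f_def by (subst sum.Sigma) auto
  also have "\<dots> = 0"
  proof (rule sum_eq_0_if_involution_neg[where h = h])
    fix x assume "x \<in> (SIGMA j:{..<Suc n}. {..<j})"
    then obtain j i where x: "x = (j, i)" "i < j" "j < Suc n"
      by auto
    show "h x \<in> (SIGMA j:{..<Suc n}. {..<j})" "h (h x) = x"
      using x adjacent(1) by (auto simp: h_def Transposition.transpose_def)
    show "f x = 0" if "h x = x"
    proof (cases "(j, i) = (Suc p, p)")
      case True
      then show ?thesis
        using x bracket_term_adjacent_self by (simp add: f_def)
    next
      case False
      then have "?t j = j" "?t i = i"
        using that x by (auto simp: h_def)
      then show ?thesis
        using x bracket_term_adjacent_other by (simp add: f_def transpose_Suc_eq_self_iff)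
    qed
    show "f (h x) + f x = 0" if "h x \<noteq> x"
    proof -
      have "(j, i) \<noteq> (Suc p, p)" "h x = (?t j, ?t i)"
        using that x by (auto simp: h_def)
      moreover have "(j = Suc p \<or> j = p) \<and> i < p \<or> (i = p \<or> i = Suc p) \<and> Suc p < j"
        using that x calculation by (auto simp: transpose_Suc_eq_self_iff)
      ultimately show ?thesis
        using x us adjacent bracket_term_adjacent_left[of i p us \<omega>] bracket_term_adjacent_right[of p j us \<omega>]
        by (auto simp: f_def)
    qed
  qed simp
  finally show ?thesis .
qed

lemma ce_diff_adjacent_eq_0: "ce_diff \<omega> us b = 0"
  unfolding ce_diff_def us(1) action_sum_adjacent_eq_0 bracket_sum_adjacent_eq_0 by simp

end

lemma ce_diff_Der1:
  assumes us: "length us = Suc n" "set us \<subseteq> Der1 \<iota>"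
  shows "ce_diff \<omega> us = mult_op (d_val \<omega> us)"
proof
  fix b
  have D: "set us \<subseteq> Diff1 \<iota>"
    using us(2) Der1_subset_Diff1 by blast
  have action: "ce_action_term \<omega> us i b = (us ! i) (\<omega> (del_nth i us) 1) * b" if i: "i < Suc n" for i
  proof -
    obtain c where c: "\<And>b. \<omega> (del_nth i us) b = c * b"
      using form_mult_op_valued length_set_del_nth[OF us(1) D i] by metis
    have "us ! i \<in> Der1 \<iota>"
      using us i by auto
    then show ?thesis
      by (simp add: ce_action_term_def commutator_def c Der1_mult)
  qed
  show "ce_diff \<omega> us b = mult_op (d_val \<omega> us) b"
    unfolding ce_diff_def d_val_eq mult_op_def us(1)
    by (simp add: action bracket_term_mult_op[OF us(1) D, of _ _ b] sum_distrib_right distrib_right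
        mult.assoc del: sum.lessThan_Suc)
qed

context
  fixes us :: "('a \<Rightarrow> 'a) list" and a :: 'a
  assumes us: "length us = Suc n" "set us \<subseteq> Der1 \<iota>"
begin

lemma action_value_A_linear:
  assumes "i < Suc n"
  shows "(us[0 := mult_op a \<circ> us ! 0] ! i) (\<omega> (del_nth i (us[0 := mult_op a \<circ> us ! 0])) 1) =
    a * (us ! i) (\<omega> (del_nth i us) 1) + (if i = 0 then 0 else (us ! i) a * \<omega> (del_nth i us) 1)"
proof (cases "i = 0")
  case True
  then show ?thesis
    using us by (simp add: del_nth_list_update mult_op_def)
next
  case False
  have "del_nth i (us[0 := mult_op a \<circ> us ! 0]) = (del_nth i us)[0 := mult_op a \<circ> del_nth i us ! 0]"
    using us \<open>i < Suc n\<close> False by (simp add: del_nth_list_update nth_del_nth)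
  then have "\<omega> (del_nth i (us[0 := mult_op a \<circ> us ! 0])) 1 = a * \<omega> (del_nth i us) 1"
    using form_A_linear[OF length_set_del_nth[OF us \<open>i < Suc n\<close>]] by simp
  moreover have "us ! i \<in> Der1 \<iota>"
    using us \<open>i < Suc n\<close> by auto
  ultimately show ?thesis
    using False by (simp add: Der1_mult algebra_simps)
qed

lemma bracket_value_A_linear_0:
  assumes "0 < j" "j < Suc n"
  shows "ce_bracket_term \<omega> (us[0 := mult_op a \<circ> us ! 0]) 0 j 1 =
    a * ce_bracket_term \<omega> us 0 j 1 - (us ! j) a * \<omega> (del_nth j us) 1"
proof -
  define R where "R = del_nth 0 (del_nth j us)"
  have X: "us ! 0 \<in> Der1 \<iota>" "us ! j \<in> Der1 \<iota>"
    using us assms by auto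
  then have C: "commutator (us ! 0) (us ! j) \<in> Der1 \<iota>"
    by (rule commutator_in_Der1)
  have R: "length R = n - 1" "set R \<subseteq> Der1 \<iota>"
    using us assms by (simp_all add: R_def set_del_nth_subset)
  then have RD: "set R \<subseteq> Diff1 \<iota>"
    using Der1_subset_Diff1 by blast
  have "commutator (mult_op a \<circ> us ! 0) (us ! j) =
      op_add (mult_op a \<circ> commutator (us ! 0) (us ! j)) (mult_op (- (us ! j) a) \<circ> us ! 0)"
    by (auto simp: fun_eq_iff commutator_def op_add_def mult_op_def Der1_mult[OF X(2)] algebra_simps)
  moreover have "\<omega> (op_add (mult_op a \<circ> commutator (us ! 0) (us ! j)) (mult_op (- (us ! j) a) \<circ> us ! 0) # R) 1 =
      \<omega> ((mult_op a \<circ> commutator (us ! 0) (us ! j)) # R) 1 + \<omega> ((mult_op (- (us ! j) a) \<circ> us ! 0) # R) 1"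
    using form_add_hd[OF R(1) RD] mult_op_comp_in_Der1[OF C] mult_op_comp_in_Der1[OF X(1)]
      Der1_subset_Diff1 by blast
  moreover have "\<omega> ((mult_op a \<circ> commutator (us ! 0) (us ! j)) # R) 1 = a * \<omega> (commutator (us ! 0) (us ! j) # R) 1"
    using form_A_linear[of "commutator (us ! 0) (us ! j) # R"] R C n_pos by simp
  moreover have "\<omega> ((mult_op (- (us ! j) a) \<circ> us ! 0) # R) 1 = - (us ! j) a * \<omega> (us ! 0 # R) 1"
    using form_A_linear[of "us ! 0 # R"] R X n_pos by simp
  moreover have "us ! 0 # R = del_nth j us"
    using us assms by (cases us; cases j) (auto simp: R_def del_nth_def)
  ultimately show ?thesis
    using us assms by (simp add: ce_bracket_term_def del_nth2_list_update_same R_def)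
qed

lemma bracket_value_A_linear_pos:
  assumes "0 < i" "i < j" "j < Suc n"
  shows "ce_bracket_term \<omega> (us[0 := mult_op a \<circ> us ! 0]) i j 1 = a * ce_bracket_term \<omega> us i j 1"
proof -
  define L where "L = commutator (us ! i) (us ! j) # del_nth i (del_nth j us)"
  have "us ! i \<in> Der1 \<iota>" "us ! j \<in> Der1 \<iota>"
    using us assms by auto
  then have L: "length L = n" "set L \<subseteq> Der1 \<iota>"
    unfolding L_def using bracket_term_args[OF us assms(2,3) commutator_in_Der1] by blast+
  have "del_nth i (del_nth j (us[0 := mult_op a \<circ> us ! 0])) =
      (del_nth i (del_nth j us))[0 := mult_op a \<circ> us ! 0]"
    using assms us by (simp add: del_nth_list_update)
  moreover have "del_nth i (del_nth j us) ! 0 = us ! 0"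
    using assms us by (simp add: nth_del_nth)
  ultimately have "commutator (us[0 := mult_op a \<circ> us ! 0] ! i) (us[0 := mult_op a \<circ> us ! 0] ! j) #
      del_nth i (del_nth j (us[0 := mult_op a \<circ> us ! 0])) = L[1 := mult_op a \<circ> L ! 1]"
    using assms by (simp add: L_def)
  moreover have "2 \<le> n"
    using assms by simp
  ultimately show ?thesis
    unfolding ce_bracket_term_def using form_A_linear_second[OF L] by (simp add: L_def)
qed

lemma d_val_A_linear: "d_val \<omega> (us[0 := mult_op a \<circ> us ! 0]) = a * d_val \<omega> us"
proof -
  let ?vs = "us[0 := mult_op a \<circ> us ! 0]"
  define E where "E i = (if i = 0 then 0 else (-1) ^ i * ((us ! i) a * \<omega> (del_nth i us) 1))" for i
  have action: "(\<Sum>i<Suc n. (-1) ^ i * (?vs ! i) (\<omega> (del_nth i ?vs) 1)) =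
      a * (\<Sum>i<Suc n. (-1) ^ i * (us ! i) (\<omega> (del_nth i us) 1)) + (\<Sum>i<Suc n. E i)"
    unfolding sum_distrib_left sum.distrib[symmetric]
    by (rule sum.cong) (auto simp: action_value_A_linear E_def algebra_simps)
  have bracket: "(\<Sum>i<j. (-1) ^ (i + j) * ce_bracket_term \<omega> ?vs i j 1) =
      a * (\<Sum>i<j. (-1) ^ (i + j) * ce_bracket_term \<omega> us i j 1) - E j" if "j < Suc n" for j
  proof (cases "j = 0")
    case True
    then show ?thesis
      by (simp add: E_def)
  next
    case False
    have "(\<Sum>i<j. (-1) ^ (i + j) * ce_bracket_term \<omega> ?vs i j 1) =
        (\<Sum>i<j. a * ((-1) ^ (i + j) * ce_bracket_term \<omega> us i j 1) -
          (if i = 0 then (-1) ^ j * ((us ! j) a * \<omega> (del_nth j us) 1) else 0))"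
      by (rule sum.cong)
        (use that False in \<open>auto simp: bracket_value_A_linear_0 bracket_value_A_linear_pos algebra_simps\<close>)
    also have "\<dots> = a * (\<Sum>i<j. (-1) ^ (i + j) * ce_bracket_term \<omega> us i j 1) - E j"
      using False by (simp add: sum_subtractf sum_distrib_left sum.delta E_def)
    finally show ?thesis .
  qed
  have "(\<Sum>j<Suc n. \<Sum>i<j. (-1) ^ (i + j) * ce_bracket_term \<omega> ?vs i j 1) =
      a * (\<Sum>j<Suc n. \<Sum>i<j. (-1) ^ (i + j) * ce_bracket_term \<omega> us i j 1) - (\<Sum>j<Suc n. E j)"
    by (simp add: bracket sum_subtractf sum_distrib_left del: sum.lessThan_Suc)
  then show ?thesis
    unfolding d_val_eq length_list_update us(1) action by (simp add: algebra_simps)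
qed

end

lemma ce_diff_alternating:
  assumes "length us = Suc n" "set us \<subseteq> Diff1 \<iota>" "i < j" "j < Suc n" "us ! i = us ! j"
  shows "ce_diff \<omega> us = (\<lambda>b. 0)"
proof (rule vanishing_if_adjacent_vanishing[where S = "Diff1 \<iota>" and us = us and i = i and j = j])
  show "ce_diff \<omega> vs = (\<lambda>b. 0)"
    if "length vs = Suc n" "set vs \<subseteq> Diff1 \<iota>" "Suc p < Suc n" "vs ! p = vs ! Suc p" for vs p
    by (rule ext) (rule ce_diff_adjacent_eq_0[OF that])
qed (use assms in \<open>auto intro: op_add_in_Diff1 ce_diff_add\<close>)

lemma Lk_ce_diff: "Lk \<iota> (Suc n) (ce_diff \<omega>)"
  unfolding Lk_def
proof (intro conjI allI impI; elim conjE)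
  fix us assume "length us = Suc n" "set us \<subseteq> Diff1 \<iota>"
  then show "ce_diff \<omega> us \<in> Diff1 \<iota>"
    by (metis ce_diff_mult_op mult_op_in_Diff1)
next
  fix us i u v assume "length us = Suc n" "set us \<subseteq> Diff1 \<iota>" "i < Suc n" "u \<in> Diff1 \<iota>" "v \<in> Diff1 \<iota>"
  then show "ce_diff \<omega> (us[i := op_add u v]) = op_add (ce_diff \<omega> (us[i := u])) (ce_diff \<omega> (us[i := v]))"
    by (rule ce_diff_add)
next
  fix us i c u assume "length us = Suc n" "set us \<subseteq> Diff1 \<iota>" "i < Suc n" "u \<in> Diff1 \<iota>"
  then show "ce_diff \<omega> (us[i := op_scale \<iota> c u]) = op_scale \<iota> c (ce_diff \<omega> (us[i := u]))"
    by (rule ce_diff_scale)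
next
  fix us i j assume "length us = Suc n" "set us \<subseteq> Diff1 \<iota>" "i < j" "j < Suc n" "us ! i = us ! j"
  then show "ce_diff \<omega> us = (\<lambda>b. 0)"
    by (rule ce_diff_alternating)
qed

lemma Omega_ce_diff: "Omega \<iota> (Suc n) (ce_diff \<omega>)"
  unfolding Omega_def
proof (intro conjI allI impI Lk_ce_diff; (elim conjE exE rangeE)?)
  fix us assume "length us = Suc n" "set us \<subseteq> Diff1 \<iota>"
  then show "\<exists>a. ce_diff \<omega> us = mult_op a"
    using ce_diff_mult_op by blast
next
  fix us i a assume "length us = Suc n" "set us \<subseteq> Diff1 \<iota>" "i < Suc n" "us ! i = mult_op a"
  then show "ce_diff \<omega> us = (\<lambda>b. 0)"
    using ce_diff_vanish by blast
next
  fix a us assume us: "length us = Suc n" "set us \<subseteq> Der1 \<iota>"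
  then have "us ! 0 \<in> Der1 \<iota>"
    by auto
  then have "set (us[0 := mult_op a \<circ> us ! 0]) \<subseteq> Der1 \<iota>"
    using us by (simp add: set_list_update_subset mult_op_comp_in_Der1)
  then have "ce_diff \<omega> (us[0 := mult_op a \<circ> us ! 0]) = mult_op (d_val \<omega> (us[0 := mult_op a \<circ> us ! 0]))"
    using us by (simp add: ce_diff_Der1)
  also have "\<dots> = mult_op (a * d_val \<omega> us)"
    by (simp only: d_val_A_linear[OF us])
  also have "\<dots> = mult_op a \<circ> ce_diff \<omega> us"
    by (simp add: ce_diff_Der1[OF us] mult_op_def fun_eq_iff mult.assoc)
  finally show "ce_diff \<omega> (us[0 := mult_op a \<circ> us ! 0]) = mult_op a \<circ> ce_diff \<omega> us" .
qed

end

lemma uminus_in_Diff1: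
  assumes u: "u \<in> Diff1 \<iota>"
  shows "(\<lambda>b. - u b) \<in> Diff1 \<iota>"
proof (rule Diff1I)
  show "- u (x + y) = - u x + - u y" for x y
    by (simp add: Diff1_add[OF u])
  show "- u (\<iota> c * x) = \<iota> c * - u x" for c x
    by (simp add: Diff1_scale[OF u])
  fix a
  obtain c where "\<forall>b. u (a * b) = a * u b + c * b"
    using Diff1_mult[OF u] by blast
  then show "\<exists>e. \<forall>b. - u (a * b) = a * - u b + e * b"
    by (intro exI[of _ "- c"]) simp
qed

lemma Omega_uminus:
  assumes "Omega \<iota> k \<phi>"
  shows "Omega \<iota> k (\<lambda>us b. - \<phi> us b)"
  unfolding Omega_def Lk_def
proof (intro conjI allI impI; (elim conjE exE rangeE)?)
  fix us assume "length us = k" "set us \<subseteq> Diff1 \<iota>"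
  then have "\<phi> us \<in> Diff1 \<iota>"
    using assms by (simp add: Omega_def Lk_def)
  then show "(\<lambda>b. - \<phi> us b) \<in> Diff1 \<iota>"
    by (rule uminus_in_Diff1)
next
  fix us i u v assume "length us = k" "set us \<subseteq> Diff1 \<iota>" "i < k" "u \<in> Diff1 \<iota>" "v \<in> Diff1 \<iota>"
  then have "\<phi> (us[i := op_add u v]) = op_add (\<phi> (us[i := u])) (\<phi> (us[i := v]))"
    using assms by (simp add: Omega_def Lk_def)
  then show "(\<lambda>b. - \<phi> (us[i := op_add u v]) b) = op_add (\<lambda>b. - \<phi> (us[i := u]) b) (\<lambda>b. - \<phi> (us[i := v]) b)"
    by (simp add: op_add_apply fun_eq_iff)
next
  fix us i c u assume "length us = k" "set us \<subseteq> Diff1 \<iota>" "i < k" "u \<in> Diff1 \<iota>"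
  then have "\<phi> (us[i := op_scale \<iota> c u]) = op_scale \<iota> c (\<phi> (us[i := u]))"
    using assms by (simp add: Omega_def Lk_def)
  then show "(\<lambda>b. - \<phi> (us[i := op_scale \<iota> c u]) b) = op_scale \<iota> c (\<lambda>b. - \<phi> (us[i := u]) b)"
    by (simp add: op_scale_apply fun_eq_iff)
next
  fix us i j assume "length us = k" "set us \<subseteq> Diff1 \<iota>" "i < j" "j < k" "us ! i = us ! j"
  then have "\<phi> us = (\<lambda>b. 0)"
    using assms unfolding Omega_def Lk_def by blast
  then show "(\<lambda>b. - \<phi> us b) = (\<lambda>b. 0)"
    by simp
next
  fix us assume "length us = k" "set us \<subseteq> Diff1 \<iota>"
  then have "\<exists>a. \<phi> us = mult_op a"
    using assms by (simp add: Omega_def)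
  then obtain a where "\<phi> us = mult_op a" ..
  then show "\<exists>a. (\<lambda>b. - \<phi> us b) = mult_op a"
    by (intro exI[of _ "- a"]) (simp add: mult_op_def)
next
  fix us i a assume "length us = k" "set us \<subseteq> Diff1 \<iota>" "i < k" "us ! i = mult_op a"
  then have "\<phi> us = (\<lambda>b. 0)"
    using assms unfolding Omega_def by blast
  then show "(\<lambda>b. - \<phi> us b) = (\<lambda>b. 0)"
    by simp
next
  fix a us assume "length us = k" "set us \<subseteq> Der1 \<iota>" "0 < k"
  then have "\<phi> (us[0 := mult_op a \<circ> us ! 0]) = mult_op a \<circ> \<phi> us"
    using assms by (simp add: Omega_def)
  then show "(\<lambda>b. - \<phi> (us[0 := mult_op a \<circ> us ! 0]) b) = mult_op a \<circ> (\<lambda>b. - \<phi> us b)"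
    by (simp add: mult_op_def fun_eq_iff)
qed

lemma Omega_cong:
  assumes "\<And>us. length us = k \<Longrightarrow> \<phi> us = \<psi> us"
  shows "Omega \<iota> k \<phi> \<longleftrightarrow> Omega \<iota> k \<psi>"
  by (simp add: Omega_def Lk_def assms cong: imp_cong conj_cong)

theorem theorem1:
  fixes \<iota> :: "'k::field \<Rightarrow> 'a::comm_ring_1"
    and n :: nat
    and \<omega> :: "('a \<Rightarrow> 'a) list \<Rightarrow> ('a \<Rightarrow> 'a)"
  assumes "K_algebra \<iota>"
    and "n \<ge> 1"
    and "Omega \<iota> n \<omega>"
  shows "Omega \<iota> (Suc n) (bracket 2 n mu \<omega>) \<and>
         (\<forall>Xs. length Xs = Suc n \<and> set Xs \<subseteq> Der1 \<iota> \<longrightarrow>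
            bracket 2 n mu \<omega> Xs = mult_op (- d_val \<omega> Xs))"
proof -
  interpret Omega_form \<iota> n \<omega>
    using assms(2,3) by unfold_locales
  have closed_form: "bracket 2 n mu \<omega> us = (\<lambda>b. - ce_diff \<omega> us b)" if "length us = Suc n" for us
    using bracket_mu_eq_neg_ce_diff[OF that assms(2)] .
  have "Omega \<iota> (Suc n) (bracket 2 n mu \<omega>) \<longleftrightarrow> Omega \<iota> (Suc n) (\<lambda>us b. - ce_diff \<omega> us b)"
    using closed_form by (rule Omega_cong)
  with Omega_uminus[OF Omega_ce_diff] have "Omega \<iota> (Suc n) (bracket 2 n mu \<omega>)"
    by simp
  moreover have "bracket 2 n mu \<omega> Xs = mult_op (- d_val \<omega> Xs)"
    if "length Xs = Suc n" "set Xs \<subseteq> Der1 \<iota>" for Xs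
    using closed_form[OF that(1)] ce_diff_Der1[OF that] by (simp add: mult_op_def)
  ultimately show ?thesis
    by blast
qed

end
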